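(* Let $\Omega \subset \mathbb{R}^{d}$ be a bounded domain with boundary $\partial\Omega$, and suppose the Dirichlet boundary condition is prescribed on the whole boundary, i.e. $\Gamma^{\mathrm{D}} = \partial\Omega$, with prescribed concentration $c^{\mathrm{p}}$ on $\Gamma^{\mathrm{D}}$. Let the diffusivity tensor $\mathbb{D}(\mathbf{x})$ be symmetric, positive definite, and continuously differentiable. Let $f \in L^{2}(\Omega)$ with $f(\mathbf{x}) \geq 0$ almost everywhere in $\Omega$. Let $(c,\mathbf{v})$, with $c \in H^{1}(\Omega)$ and $\mathbf{v} \in \mathcal{V}$, be a weak solution of the variational multiscale formulation \[ \left(\mathbf{w};\mathbb{D}^{-1}\mathbf{v}\right) - \left(\nabla \cdot \mathbf{w}; c\right) + \left(\mathbf{w}\cdot \mathbf{n};c^{\mathrm{p}}\right)_{\Gamma^{\mathrm{D}}} - \left(q;\nabla \cdot \mathbf{v} - f \right) - \frac{1}{2}\left(\mathbb{D}^{-1} \mathbf{w} + \nabla q;\ \mathbb{D}\left(\mathbb{D}^{-1}\mathbf{v} + \nabla c\right)\right) = 0 \] for all $q \in H^{1}(\Omega)$ and all $\mathbf{w} \in \mathcal{W}$, and assume that $c \in H^{2}(\Omega)\cap C^{1}(\Omega) \cap C^{0}(\bar{\Omega})$. Then \[ \min_{\bar{\Omega}} c(\mathbf{x}) = \min_{\partial \Omega} c(\mathbf{x}). \]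
   Context: This concerns the mixed (first-order) form of the steady diffusion (Poisson-type) equation: find the concentration $c$ and the auxiliary flux/velocity $\mathbf{v}$ with $\mathbb{D}^{-1}\mathbf{v} = -\nabla c$ and $\nabla\cdot\mathbf{v} = f$ in $\Omega$, and $c = c^{\mathrm{p}}$ on the Dirichlet boundary $\Gamma^{\mathrm{D}}$. Here $\mathbf{n}$ is the unit outward normal to $\partial\Omega$, $(a;b)$ denotes the $L^{2}(\Omega)$ inner product $\int_\Omega a\cdot b\,d\Omega$, and $(a;b)_{\Gamma^{\mathrm{D}}}$ denotes the $L^{2}$ inner product over $\Gamma^{\mathrm{D}}$. The spaces $\mathcal{V}$ and $\mathcal{W}$ are the trial and test spaces for the velocity in the mixed formulation; since the whole boundary is of Dirichlet type (no Neumann part), they are $H(\mathrm{div};\Omega) = \{\mathbf{w} \in (L^{2}(\Omega))^{d} : \nabla\cdot\mathbf{w} \in L^{2}(\Omega)\}$. The concentration trial space and its weighting-function space are both $H^{1}(\Omega)$ (the Dirichlet condition is imposed weakly via the boundary term). *)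

theory Defs
  imports "HOL-Analysis.Analysis"
begin

type_synonym 'n vec = "real ^ 'n"

definition C1_on :: "('n::finite) vec set \<Rightarrow> ('n vec \<Rightarrow> real) \<Rightarrow> bool" where
  "C1_on S u \<longleftrightarrow> (\<exists>g. (\<forall>x\<in>S. (u has_derivative (\<lambda>h. g x \<bullet> h)) (at x)) \<and> continuous_on S g)"

definition test_fun :: "('n::finite) vec set \<Rightarrow> ('n vec \<Rightarrow> real) \<Rightarrow> ('n vec \<Rightarrow> 'n vec) \<Rightarrow> bool" where
  "test_fun \<Omega> phi dphi \<longleftrightarrow>
     (\<forall>x. (phi has_derivative (\<lambda>h. dphi x \<bullet> h)) (at x)) \<and> continuous_on UNIV dphi \<and>
     compact (closure {x. phi x \<noteq> 0}) \<and> closure {x. phi x \<noteq> 0} \<subseteq> \<Omega>"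

definition L2 :: "('n::finite) vec set \<Rightarrow> ('n vec \<Rightarrow> real) \<Rightarrow> bool" where
  "L2 \<Omega> u \<longleftrightarrow> u \<in> borel_measurable (lebesgue_on \<Omega>) \<and> integrable (lebesgue_on \<Omega>) (\<lambda>x. (u x)\<^sup>2)"

definition L2v :: "('n::finite) vec set \<Rightarrow> ('n vec \<Rightarrow> 'n vec) \<Rightarrow> bool" where
  "L2v \<Omega> w \<longleftrightarrow> w \<in> borel_measurable (lebesgue_on \<Omega>) \<and> integrable (lebesgue_on \<Omega>) (\<lambda>x. (norm (w x))\<^sup>2)"

definition is_weak_grad :: "('n::finite) vec set \<Rightarrow> ('n vec \<Rightarrow> real) \<Rightarrow> ('n vec \<Rightarrow> 'n vec) \<Rightarrow> bool" where
  "is_weak_grad \<Omega> u g \<longleftrightarrow> L2v \<Omega> g \<and>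
     (\<forall>phi dphi. test_fun \<Omega> phi dphi \<longrightarrow>
        (LINT x|lebesgue_on \<Omega>. u x *\<^sub>R dphi x) = - (LINT x|lebesgue_on \<Omega>. phi x *\<^sub>R g x))"

definition is_weak_div :: "('n::finite) vec set \<Rightarrow> ('n vec \<Rightarrow> 'n vec) \<Rightarrow> ('n vec \<Rightarrow> real) \<Rightarrow> bool" where
  "is_weak_div \<Omega> w h \<longleftrightarrow> L2 \<Omega> h \<and>
     (\<forall>phi dphi. test_fun \<Omega> phi dphi \<longrightarrow>
        (LINT x|lebesgue_on \<Omega>. w x \<bullet> dphi x) = - (LINT x|lebesgue_on \<Omega>. phi x * h x))"

definition wgrad :: "('n::finite) vec set \<Rightarrow> ('n vec \<Rightarrow> real) \<Rightarrow> ('n vec \<Rightarrow> 'n vec)" where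
  "wgrad \<Omega> u = (SOME g. is_weak_grad \<Omega> u g)"

definition wdiv :: "('n::finite) vec set \<Rightarrow> ('n vec \<Rightarrow> 'n vec) \<Rightarrow> ('n vec \<Rightarrow> real)" where
  "wdiv \<Omega> w = (SOME h. is_weak_div \<Omega> w h)"

definition H1 :: "('n::finite) vec set \<Rightarrow> ('n vec \<Rightarrow> real) \<Rightarrow> bool" where
  "H1 \<Omega> u \<longleftrightarrow> L2 \<Omega> u \<and> (\<exists>g. is_weak_grad \<Omega> u g)"

definition H2 :: "('n::finite) vec set \<Rightarrow> ('n vec \<Rightarrow> real) \<Rightarrow> bool" where
  "H2 \<Omega> u \<longleftrightarrow> H1 \<Omega> u \<and> (\<forall>i. H1 \<Omega> (\<lambda>x. wgrad \<Omega> u x $ i))"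

definition Hdiv :: "('n::finite) vec set \<Rightarrow> ('n vec \<Rightarrow> 'n vec) \<Rightarrow> bool" where
  "Hdiv \<Omega> w \<longleftrightarrow> L2v \<Omega> w \<and> (\<exists>h. is_weak_div \<Omega> w h)"

text \<open>Boundary pairing (w.n ; c^p) over the Dirichlet boundary = whole boundary, where
  c^p is given as the boundary trace of Cp in H^1(Omega); defined by Green's formula
  (the standard definition of the normal-trace duality for w in H(div)).\<close>
definition bdry_pair :: "('n::finite) vec set \<Rightarrow> ('n vec \<Rightarrow> 'n vec) \<Rightarrow> ('n vec \<Rightarrow> real) \<Rightarrow> real" where
  "bdry_pair \<Omega> w Cp = (LINT x|lebesgue_on \<Omega>. wdiv \<Omega> w x * Cp x)
                       + (LINT x|lebesgue_on \<Omega>. w x \<bullet> wgrad \<Omega> Cp x)"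

end

theory Submission
  imports Defs
begin

text \<open>Test the formulation with \<open>q = 0\<close> and \<open>w = \<psi> e\<^sub>k\<close>, \<open>\<psi>\<close> a test function. The
  boundary pairing vanishes and the Galerkin terms add up to \<open>(\<psi>; r\<^sub>k)\<close> for the residual
  \<open>r = D\<^sup>-\<^sup>1v + \<nabla>c\<close>, while by the symmetry of \<open>D\<close> the stabilisation term contributes
  \<open>-(1/2) (\<psi>; r\<^sub>k)\<close>; hence \<open>v = -D\<nabla>c\<close> almost everywhere. Testing with \<open>w = 0\<close> and
  \<open>q = \<phi>\<close> then gives \<open>\<nabla>\<cdot>v = f\<close> weakly, so \<open>(D\<nabla>c; \<nabla>\<phi>) = (f; \<phi>) \<ge> 0\<close> for \<open>\<phi> \<ge> 0\<close>:
  \<open>c\<close> is a weak supersolution. If the minimum of \<open>c\<close> over \<open>closure \<Omega>\<close> were below its minimum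
  over the boundary, the test function \<open>(\<kappa> - c)\<^sub>+\<^sup>2\<close> for an intermediate level \<open>\<kappa>\<close> is
  compactly supported in \<open>\<Omega>\<close> and forces \<open>\<nabla>c = 0\<close> on \<open>{c < \<kappa>}\<close>, so \<open>c\<close> would be constant
  on the connected domain.\<close>

section \<open>Compactly supported \<open>C\<^sup>1\<close> functions and integration by parts\<close>

lemma gradient_zero_where_locally_zero:
  fixes u :: "real^'n::finite \<Rightarrow> real"
  assumes der: "(u has_derivative (\<lambda>h. d \<bullet> h)) (at y)"
    and S: "open S" "y \<in> S" "\<And>x. x \<in> S \<Longrightarrow> u x = 0"
  shows "d = 0"
proof -
  have "((\<lambda>x. 0::real) has_derivative (\<lambda>h. 0)) (at y)" by simp
  then have "(u has_derivative (\<lambda>h. 0)) (at y)"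
    by (rule has_derivative_transform_within_open[OF _ S(1,2)]) (use S(3) in auto)
  from has_derivative_unique[OF der this] have "\<And>h. d \<bullet> h = 0" by meson
  from this[of d] show ?thesis by simp
qed

definition C1_grad :: "(real^'n::finite \<Rightarrow> real) \<Rightarrow> (real^'n \<Rightarrow> real^'n) \<Rightarrow> bool" where
  "C1_grad u du \<longleftrightarrow> (\<forall>x. (u has_derivative (\<lambda>h. du x \<bullet> h)) (at x)) \<and> continuous_on UNIV du"

lemma C1_grad_continuous: "C1_grad u du \<Longrightarrow> continuous_on UNIV u"
  unfolding C1_grad_def by (meson continuous_at_imp_continuous_on has_derivative_continuous)

lemma C1_grad_of_compact_support_in_open:
  fixes u :: "real^'n::finite \<Rightarrow> real"
  assumes O: "open \<Omega>" and K: "compact K" "K \<subseteq> \<Omega>"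
    and der: "\<And>x. x \<in> \<Omega> \<Longrightarrow> (u has_derivative (\<lambda>h. du x \<bullet> h)) (at x)"
    and cont: "continuous_on \<Omega> du"
    and zero: "\<And>x. x \<notin> K \<Longrightarrow> u x = 0"
  shows "C1_grad u (\<lambda>x. if x \<in> \<Omega> then du x else 0)"
proof -
  define du' where "du' = (\<lambda>x. if x \<in> \<Omega> then du x else 0)"
  have Kc: "open (- K)" using K compact_imp_closed by auto
  have du'_0: "du' x = 0" if "x \<notin> K" for x
  proof (cases "x \<in> \<Omega>")
    case True
    have "du x = 0"
      by (rule gradient_zero_where_locally_zero[OF der[OF True] Kc]) (use that zero in auto)
    then show ?thesis by (simp add: du'_def)
  qed (simp add: du'_def)
  have "(u has_derivative (\<lambda>h. du' x \<bullet> h)) (at x)" for x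
  proof (cases "x \<in> \<Omega>")
    case True then show ?thesis using der by (simp add: du'_def)
  next
    case False
    then have xK: "x \<in> - K" using K by auto
    have "((\<lambda>x. 0::real) has_derivative (\<lambda>h. 0)) (at x)" by simp
    then have "(u has_derivative (\<lambda>h. 0)) (at x)"
      by (rule has_derivative_transform_within_open[OF _ Kc xK]) (use zero in auto)
    then show ?thesis using False by (simp add: du'_def)
  qed
  moreover have "isCont du' x" for x
  proof (cases "x \<in> \<Omega>")
    case True
    have "isCont du x" using O True cont continuous_on_eq_continuous_at by blast
    moreover have ev: "eventually (\<lambda>y. du' y = du y) (nhds x)"
      using eventually_nhds_in_open[OF O True] by eventually_elim (simp add: du'_def)
    ultimately show ?thesis using isCont_cong[OF ev] by simp
  next
    case False
    then have xK: "x \<in> - K" using K by auto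
    have ev: "eventually (\<lambda>y. du' y = 0) (nhds x)"
      using eventually_nhds_in_open[OF Kc xK] by eventually_elim (use du'_0 in simp)
    show ?thesis using isCont_cong[OF ev] by simp
  qed
  ultimately show ?thesis
    unfolding du'_def[symmetric] C1_grad_def by (simp add: continuous_at_imp_continuous_on)
qed

lemma C1_grad_line_derivative:
  assumes "C1_grad u du"
  shows "((\<lambda>t. u (x + t *\<^sub>R axis i 1)) has_real_derivative du (x + t *\<^sub>R axis i 1) $ i) (at t)"
proof -
  have "((\<lambda>t. x + t *\<^sub>R axis i 1) has_derivative (\<lambda>s. s *\<^sub>R axis i 1)) (at t)"
    by (auto intro!: derivative_eq_intros)
  moreover have "(u has_derivative (\<lambda>h. du (x + t *\<^sub>R axis i 1) \<bullet> h)) (at (x + t *\<^sub>R axis i 1))"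
    using assms by (simp add: C1_grad_def)
  ultimately have "((\<lambda>t. u (x + t *\<^sub>R axis i 1)) has_derivative
      (\<lambda>s. du (x + t *\<^sub>R axis i 1) \<bullet> (s *\<^sub>R axis i 1))) (at t)"
    by (rule has_derivative_compose)
  moreover have "(\<lambda>s. du (x + t *\<^sub>R axis i 1) \<bullet> (s *\<^sub>R axis i 1)) = (*) (du (x + t *\<^sub>R axis i 1) $ i)"
    by (auto simp: fun_eq_iff inner_axis)
  ultimately show ?thesis by (simp add: has_field_derivative_def)
qed

lemma C1_grad_difference_quotient_bound:
  assumes u: "C1_grad u du" and C: "\<And>y. norm (du y) \<le> C" and t: "0 < t"
  shows "\<bar>(u (x + t *\<^sub>R axis i 1) - u x) / t\<bar> \<le> C"
proof -
  obtain z where "u (x + t *\<^sub>R axis i 1) - u (x + 0 *\<^sub>R axis i 1) = (t - 0) * du (x + z *\<^sub>R axis i 1) $ i"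
    using MVT2[OF t, of "\<lambda>s. u (x + s *\<^sub>R axis i 1)" "\<lambda>s. du (x + s *\<^sub>R axis i 1) $ i"]
      C1_grad_line_derivative[OF u] by blast
  then have "\<bar>(u (x + t *\<^sub>R axis i 1) - u x) / t\<bar> = \<bar>du (x + z *\<^sub>R axis i 1) $ i\<bar>"
    using t by simp
  also have "\<dots> \<le> C"
    using component_le_norm_cart[of "du (x + z *\<^sub>R axis i 1)" i] C[of "x + z *\<^sub>R axis i 1"] by linarith
  finally show ?thesis .
qed

lemma C1_grad_compact_support_bounded:
  assumes u: "C1_grad u du" and supp: "\<And>x. R < norm x \<Longrightarrow> u x = 0"
  obtains C where "\<And>y. norm (du y) \<le> C"
proof -
  have du0: "du y = 0" if "R < norm y" for y
  proof (rule gradient_zero_where_locally_zero[of u _ y "{x. R < norm x}"])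
    show "(u has_derivative (\<lambda>h. du y \<bullet> h)) (at y)" using u by (simp add: C1_grad_def)
  qed (use that supp in \<open>auto intro: open_Collect_less continuous_intros\<close>)
  have "compact (du ` cball 0 R)"
    by (rule compact_continuous_image) (use u continuous_on_subset in \<open>auto simp: C1_grad_def\<close>)
  then obtain C0 where C0: "\<And>y. y \<in> cball 0 R \<Longrightarrow> norm (du y) \<le> C0"
    using compact_imp_bounded bounded_iff by (metis image_eqI)
  have "norm (du y) \<le> max C0 0" for y
    using C0[of y] du0[of y] by (cases "R < norm y") auto
  then show ?thesis using that by blast
qed

lemma integrable_lborel_compact_support:
  fixes u :: "'a::euclidean_space \<Rightarrow> real"
  assumes "continuous_on UNIV u" "\<And>x. R < norm x \<Longrightarrow> u x = 0"
  shows "integrable lborel u"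
proof -
  have "integrable lborel (\<lambda>x. indicator (cball 0 R) x *\<^sub>R u x)"
    by (rule borel_integrable_compact) (use assms(1) continuous_on_subset in auto)
  moreover have "(\<lambda>x. indicator (cball 0 R) x *\<^sub>R u x) = u"
    using assms(2) by (auto simp: indicator_def fun_eq_iff)
  ultimately show ?thesis by simp
qed

lemma lborel_integral_shift:
  fixes u :: "'a::euclidean_space \<Rightarrow> real"
  assumes "integrable lborel u"
  shows "integrable lborel (\<lambda>x. u (x + a))" "(LINT x|lborel. u (x + a)) = (LINT x|lborel. u x)"
proof -
  have umeas: "u \<in> borel_measurable borel"
    using borel_measurable_integrable[OF assms] by simp
  have "integrable (distr lborel borel ((+) a)) u" by (simp add: lborel_distr_plus assms)
  then show "integrable lborel (\<lambda>x. u (x + a))"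
    by (subst (asm) integrable_distr_eq) (auto simp: umeas add.commute)
  have "(LINT x|lborel. u x) = integral\<^sup>L (distr lborel borel ((+) a)) u"
    by (simp add: lborel_distr_plus)
  also have "\<dots> = (LINT x|lborel. u (a + x))"
    by (rule integral_distr) (auto simp: umeas)
  finally show "(LINT x|lborel. u (x + a)) = (LINT x|lborel. u x)" by (simp add: add.commute)
qed

text \<open>The difference quotients in direction \<open>i\<close> all have integral 0 by translation invariance,
  and they are dominated on a fixed ball by the mean value theorem.\<close>
lemma integral_partial_derivative_eq_0:
  fixes u :: "real^'n::finite \<Rightarrow> real"
  assumes u: "C1_grad u du" and supp: "\<And>x. R < norm x \<Longrightarrow> u x = 0"
  shows "integrable lborel (\<lambda>x. du x $ i)" "(LINT x|lborel. du x $ i) = 0"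
proof -
  obtain C where C: "\<And>y. norm (du y) \<le> C" using C1_grad_compact_support_bounded[OF u supp] by blast
  define e :: "real^'n" where "e = axis i 1"
  define h :: "nat \<Rightarrow> real" where "h m = 1 / real (Suc m)" for m
  define s where "s m x = (u (x + h m *\<^sub>R e) - u x) / h m" for m x
  have hpos: "0 < h m" "h m \<le> 1" for m by (auto simp: h_def field_simps)
  have ucont: "continuous_on UNIV u" by (rule C1_grad_continuous[OF u])
  have uint: "integrable lborel u" by (rule integrable_lborel_compact_support[OF ucont supp])
  have lim: "(\<lambda>m. s m x) \<longlonglongrightarrow> du x $ i" for x
  proof -
    from C1_grad_line_derivative[OF u, where x=x and i=i and t=0, unfolded DERIV_def]
    have "((\<lambda>t. (u (x + t *\<^sub>R e) - u x) / t) \<longlongrightarrow> du x $ i) (at 0)" by (simp add: e_def)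
    moreover have "h \<longlonglongrightarrow> 0" unfolding h_def by (rule LIMSEQ_Suc[OF lim_const_over_n])
    moreover have "\<forall>m. h m \<noteq> 0" using hpos by (metis less_irrefl)
    ultimately show ?thesis unfolding LIMSEQ_SEQ_conv[symmetric] s_def by blast
  qed
  have bound: "\<bar>s m x\<bar> \<le> indicator (cball 0 (R+1)) x *\<^sub>R C" for m x
  proof (cases "norm x \<le> R + 1")
    case True then show ?thesis
      using C1_grad_difference_quotient_bound[OF u C hpos(1)]
      by (simp add: s_def e_def indicator_def dist_norm)
  next
    case False
    have "norm (x + h m *\<^sub>R e) \<ge> norm x - h m"
      using norm_triangle_sub[of x "x + h m *\<^sub>R e"] hpos[of m] by (simp add: e_def)
    then have "R < norm (x + h m *\<^sub>R e)" using False hpos[of m] by linarith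
    then have "s m x = 0" using supp False by (simp add: s_def)
    then show ?thesis using False by (simp add: indicator_def dist_norm)
  qed
  have smeas: "s m \<in> borel_measurable lborel" for m
  proof -
    have "continuous_on UNIV (\<lambda>x. u (x + h m *\<^sub>R e))"
      by (rule continuous_on_compose2[OF ucont]) (auto intro!: continuous_intros)
    moreover have "h m \<noteq> 0" using hpos[of m] by simp
    ultimately have "continuous_on UNIV (s m)" unfolding s_def using ucont by (auto intro!: continuous_intros)
    then show ?thesis by (simp add: borel_measurable_continuous_onI)
  qed
  have dmeas: "(\<lambda>x. du x $ i) \<in> borel_measurable lborel"
    using u by (auto simp: C1_grad_def intro!: borel_measurable_continuous_onI continuous_intros)
  have wint: "integrable lborel (\<lambda>x. indicator (cball 0 (R+1)) x *\<^sub>R C)"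
    by (rule borel_integrable_compact) auto
  have s0: "integral\<^sup>L lborel (s m) = 0" for m
  proof -
    note shift = lborel_integral_shift[OF uint, of "h m *\<^sub>R e"]
    have "integral\<^sup>L lborel (s m) = ((LINT x|lborel. u (x + h m *\<^sub>R e)) - (LINT x|lborel. u x)) / h m"
      unfolding s_def by (simp add: Bochner_Integration.integral_diff[OF shift(1) uint])
    then show ?thesis by (simp add: shift(2))
  qed
  show "integrable lborel (\<lambda>x. du x $ i)"
    by (rule integrable_dominated_convergence[where s=s, OF dmeas smeas wint]) (use lim bound in auto)
  have "(\<lambda>m. integral\<^sup>L lborel (s m)) \<longlonglongrightarrow> (LINT x|lborel. du x $ i)"
    by (rule integral_dominated_convergence[where s=s, OF dmeas smeas wint]) (use lim bound in auto)
  then show "(LINT x|lborel. du x $ i) = 0" using s0 LIMSEQ_unique by (simp add: LIMSEQ_const_iff)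
qed

lemma integrable_lebesgue_on_compact_support:
  fixes g :: "real^'n::finite \<Rightarrow> 'b::{banach, second_countable_topology}"
  assumes O: "\<Omega> \<in> sets lebesgue" and K: "compact K" "K \<subseteq> \<Omega>" and g: "continuous_on K g"
    and z: "\<And>x. x \<in> \<Omega> \<Longrightarrow> x \<notin> K \<Longrightarrow> g x = 0"
  shows "integrable (lebesgue_on \<Omega>) g"
    "(LINT x|lebesgue_on \<Omega>. g x) = (LINT x|lborel. indicator K x *\<^sub>R g x)"
proof -
  have i: "integrable lborel (\<lambda>x. indicator K x *\<^sub>R g x)"
    by (rule borel_integrable_compact[OF K(1) g])
  have m: "(\<lambda>x. indicator K x *\<^sub>R g x) \<in> borel_measurable lborel"
    using i by (rule borel_measurable_integrable)
  have eq: "(\<lambda>x. indicator \<Omega> x *\<^sub>R g x) = (\<lambda>x. indicator K x *\<^sub>R g x)"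
    using z K(2) by (auto simp: fun_eq_iff indicator_def)
  show "integrable (lebesgue_on \<Omega>) g"
    using i m by (simp add: integrable_restrict_space O eq integrable_completion)
  show "(LINT x|lebesgue_on \<Omega>. g x) = (LINT x|lborel. indicator K x *\<^sub>R g x)"
    using m by (simp add: integral_restrict_space O eq integral_completion)
qed

definition tsupport :: "(real^'n::finite \<Rightarrow> real) \<Rightarrow> (real^'n) set" where
  "tsupport phi = closure {x. phi x \<noteq> 0}"

lemma not_in_tsupport: "x \<notin> tsupport phi \<Longrightarrow> phi x = 0"
  unfolding tsupport_def by (metis (mono_tags) closure_subset mem_Collect_eq subsetD)

lemma test_fun_iff:
  "test_fun \<Omega> phi dphi \<longleftrightarrow> C1_grad phi dphi \<and> compact (tsupport phi) \<and> tsupport phi \<subseteq> \<Omega>"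
  by (simp add: test_fun_def C1_grad_def tsupport_def conj_assoc)

lemma test_funI:
  assumes "C1_grad phi dphi" "compact K" "K \<subseteq> \<Omega>" "\<And>x. x \<notin> K \<Longrightarrow> phi x = 0"
  shows "test_fun \<Omega> phi dphi"
proof -
  have sub: "tsupport phi \<subseteq> K"
    unfolding tsupport_def by (rule closure_minimal) (use assms(2,4) compact_imp_closed in auto)
  then have "bounded (tsupport phi)" using bounded_subset compact_imp_bounded assms(2) by blast
  then have "compact (tsupport phi)" by (simp add: compact_eq_bounded_closed tsupport_def)
  then show ?thesis using assms(1,3) sub by (auto simp: test_fun_iff)
qed

lemma test_funD:
  assumes "test_fun \<Omega> phi dphi"
  shows "C1_grad phi dphi" "compact (tsupport phi)" "tsupport phi \<subseteq> \<Omega>"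
    "\<And>x. x \<notin> tsupport phi \<Longrightarrow> dphi x = 0"
proof -
  show C1: "C1_grad phi dphi" and K: "compact (tsupport phi)" "tsupport phi \<subseteq> \<Omega>"
    using assms by (auto simp: test_fun_iff)
  fix x assume x: "x \<notin> tsupport phi"
  show "dphi x = 0"
  proof (rule gradient_zero_where_locally_zero[of phi "dphi x" x "- tsupport phi"])
    show "(phi has_derivative (\<lambda>h. dphi x \<bullet> h)) (at x)" using C1 by (simp add: C1_grad_def)
    show "open (- tsupport phi)" using K(1) by (simp add: compact_imp_closed open_Compl)
  qed (use x not_in_tsupport in auto)
qed

text \<open>The product \<open>c \<phi>\<close>, extended by zero outside \<open>\<Omega>\<close>, is \<open>C\<^sup>1\<close> with compact support.\<close>
lemma integration_by_parts_test_fun: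
  fixes c :: "real^'n::finite \<Rightarrow> real"
  assumes O: "open \<Omega>"
    and cder: "\<And>x. x \<in> \<Omega> \<Longrightarrow> (c has_derivative (\<lambda>h. gc x \<bullet> h)) (at x)"
    and gcont: "continuous_on \<Omega> gc"
    and t: "test_fun \<Omega> phi dphi"
  shows "(LINT x|lebesgue_on \<Omega>. c x * dphi x $ i) = - (LINT x|lebesgue_on \<Omega>. phi x * gc x $ i)"
proof -
  define K where "K = tsupport phi"
  have K: "compact K" "K \<subseteq> \<Omega>" using test_funD[OF t] by (auto simp: K_def)
  have phi0: "phi x = 0" and dphi0: "dphi x = 0" if "x \<notin> K" for x
    using that test_funD(4)[OF t] not_in_tsupport by (auto simp: K_def)
  have ccont: "continuous_on \<Omega> c"
    by (rule continuous_at_imp_continuous_on) (use cder has_derivative_continuous in blast)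
  have C1: "C1_grad phi dphi" by (rule test_funD(1)[OF t])
  have pcont: "continuous_on \<Omega> phi" "continuous_on \<Omega> dphi"
    using continuous_on_subset[OF C1_grad_continuous[OF C1]]
      continuous_on_subset[of UNIV dphi] C1 by (auto simp: C1_grad_def)
  define du where "du x = phi x *\<^sub>R gc x + c x *\<^sub>R dphi x" for x
  have C1u: "C1_grad (\<lambda>x. c x * phi x) (\<lambda>x. if x \<in> \<Omega> then du x else 0)"
  proof (rule C1_grad_of_compact_support_in_open[OF O K])
    fix x assume x: "x \<in> \<Omega>"
    have "((\<lambda>x. c x * phi x) has_derivative (\<lambda>h. c x * (dphi x \<bullet> h) + (gc x \<bullet> h) * phi x)) (at x)"
      using cder[OF x] test_funD(1)[OF t] by (intro has_derivative_mult) (auto simp: C1_grad_def)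
    moreover have "(\<lambda>h. c x * (dphi x \<bullet> h) + (gc x \<bullet> h) * phi x) = (\<lambda>h. du x \<bullet> h)"
      by (auto simp: fun_eq_iff du_def inner_add_left algebra_simps)
    ultimately show "((\<lambda>x. c x * phi x) has_derivative (\<lambda>h. du x \<bullet> h)) (at x)" by simp
  next
    show "continuous_on \<Omega> du" unfolding du_def using ccont gcont pcont by (intro continuous_intros)
  qed (simp add: phi0)
  obtain R where R: "\<And>x. x \<in> K \<Longrightarrow> norm x \<le> R"
    using compact_imp_bounded[OF K(1)] bounded_iff by blast
  have "(LINT x|lborel. (if x \<in> \<Omega> then du x else 0) $ i) = 0"
  proof (rule integral_partial_derivative_eq_0(2)[OF C1u, of R])
    fix x :: "real^'n" assume "R < norm x"
    then have "x \<notin> K" using R by force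
    then show "c x * phi x = 0" using phi0 by simp
  qed
  moreover have "(if x \<in> \<Omega> then du x else 0) $ i
      = indicator K x *\<^sub>R (phi x * gc x $ i) + indicator K x *\<^sub>R (c x * dphi x $ i)" for x
    using K phi0 dphi0 by (cases "x \<in> K") (auto simp: du_def)
  moreover
  have contK: "continuous_on K (\<lambda>x. phi x * gc x $ i)" "continuous_on K (\<lambda>x. c x * dphi x $ i)"
    using continuous_on_subset[OF ccont K(2)] continuous_on_subset[OF gcont K(2)]
      continuous_on_subset[OF pcont(1) K(2)] continuous_on_subset[OF pcont(2) K(2)]
    by (auto intro!: continuous_intros)
  have "(LINT x|lebesgue_on \<Omega>. phi x * gc x $ i) = (LINT x|lborel. indicator K x *\<^sub>R (phi x * gc x $ i))"
    by (rule integrable_lebesgue_on_compact_support(2)[OF _ K contK(1)]) (use O phi0 in auto)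
  moreover
  have "(LINT x|lebesgue_on \<Omega>. c x * dphi x $ i) = (LINT x|lborel. indicator K x *\<^sub>R (c x * dphi x $ i))"
    by (rule integrable_lebesgue_on_compact_support(2)[OF _ K contK(2)]) (use O dphi0 in auto)
  ultimately show ?thesis
    using borel_integrable_compact[OF K(1) contK(1)] borel_integrable_compact[OF K(1) contK(2)]
    by (simp add: Bochner_Integration.integral_add)
qed

section \<open>The fundamental lemma of the calculus of variations\<close>

lemma C1_grad_const: "C1_grad (\<lambda>x. c) (\<lambda>x. 0)"
  by (simp add: C1_grad_def)

lemma C1_grad_mult:
  assumes "C1_grad f df" "C1_grad g dg"
  shows "C1_grad (\<lambda>x. f x * g x) (\<lambda>x. f x *\<^sub>R dg x + g x *\<^sub>R df x)"
proof -
  have "((\<lambda>x. f x * g x) has_derivative (\<lambda>h. (f x *\<^sub>R dg x + g x *\<^sub>R df x) \<bullet> h)) (at x)" for x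
  proof -
    have "((\<lambda>x. f x * g x) has_derivative (\<lambda>h. f x * (dg x \<bullet> h) + (df x \<bullet> h) * g x)) (at x)"
      using assms by (intro has_derivative_mult) (auto simp: C1_grad_def)
    moreover have "(\<lambda>h. f x * (dg x \<bullet> h) + (df x \<bullet> h) * g x) = (\<lambda>h. (f x *\<^sub>R dg x + g x *\<^sub>R df x) \<bullet> h)"
      by (auto simp: fun_eq_iff inner_add_left algebra_simps)
    ultimately show ?thesis by simp
  qed
  moreover have "continuous_on UNIV (\<lambda>x. f x *\<^sub>R dg x + g x *\<^sub>R df x)"
    using assms C1_grad_continuous[OF assms(1)] C1_grad_continuous[OF assms(2)]
    unfolding C1_grad_def by (intro continuous_intros) auto
  ultimately show ?thesis by (simp add: C1_grad_def)
qed

lemma C1_grad_prod: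
  assumes "finite I" "\<And>j. j \<in> I \<Longrightarrow> \<exists>d. C1_grad (F j) d"
  shows "\<exists>d. C1_grad (\<lambda>x. \<Prod>j\<in>I. F j x) d"
  using assms
proof (induction I rule: finite_induct)
  case empty then show ?case using C1_grad_const by auto
next
  case (insert a I)
  obtain d1 where d1: "C1_grad (F a) d1" using insert by auto
  obtain d2 where d2: "C1_grad (\<lambda>x. \<Prod>j\<in>I. F j x) d2" using insert by auto
  show ?case using C1_grad_mult[OF d1 d2] insert(1,2) by auto
qed

lemma C1_grad_compose_coordinate:
  assumes d: "\<And>t. (\<theta> has_real_derivative \<theta>' t) (at t)" and c: "continuous_on UNIV \<theta>'"
  shows "C1_grad (\<lambda>x::real^'n::finite. \<theta> (a * x$j + b)) (\<lambda>x. (\<theta>' (a * x$j + b) * a) *\<^sub>R axis j 1)"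
proof -
  have "((\<lambda>x::real^'n. \<theta> (a * x$j + b)) has_derivative
      (\<lambda>h. ((\<theta>' (a * x$j + b) * a) *\<^sub>R axis j 1) \<bullet> h)) (at x)" for x
  proof -
    have l: "((\<lambda>x::real^'n. a * x$j + b) has_derivative (\<lambda>h. a * h$j)) (at x)"
      by (auto intro!: derivative_eq_intros bounded_linear.has_derivative[OF bounded_linear_vec_nth])
    have "(\<theta> has_derivative (*) (\<theta>' (a * x$j + b))) (at (a * x$j + b))"
      using d[of "a * x$j + b"] by (simp add: has_field_derivative_def)
    from has_derivative_compose[OF l this]
    have "((\<lambda>x::real^'n. \<theta> (a * x$j + b)) has_derivative (\<lambda>h. \<theta>' (a * x$j + b) * (a * h$j))) (at x)" .
    moreover have "(\<lambda>h. \<theta>' (a * x$j + b) * (a * h$j)) = (\<lambda>h::real^'n. ((\<theta>' (a * x$j + b) * a) *\<^sub>R axis j 1) \<bullet> h)"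
      by (auto simp: fun_eq_iff inner_axis' algebra_simps)
    ultimately show ?thesis by simp
  qed
  moreover have "continuous_on UNIV (\<lambda>x::real^'n. (\<theta>' (a * x$j + b) * a) *\<^sub>R axis j (1::real))"
  proof -
    have "continuous_on UNIV (\<lambda>x::real^'n. \<theta>' (a * x$j + b))"
      by (rule continuous_on_compose2[OF c]) (auto intro!: continuous_intros)
    then show ?thesis by (intro continuous_intros)
  qed
  ultimately show ?thesis by (simp add: C1_grad_def)
qed

lemma has_real_derivative_pos_part_sq: "((\<lambda>t::real. (max 0 t)^2) has_real_derivative 2 * max 0 t) (at t)"
proof -
  consider "t = 0" | "t > 0" | "t < 0" by linarith
  then show ?thesis
  proof cases
    case 1
    have "((\<lambda>h::real. ((max 0 h)^2 - (max 0 0)^2) / (h - 0)) \<longlongrightarrow> 0) (at 0)"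
    proof (rule Lim_null_comparison)
      show "eventually (\<lambda>h::real. norm (((max 0 h)^2 - (max 0 0)^2) / (h - 0)) \<le> \<bar>h\<bar>) (at 0)"
        by (intro always_eventually allI) (auto simp: max_def abs_if power2_eq_square divide_simps)
      show "((\<lambda>h::real. \<bar>h\<bar>) \<longlongrightarrow> 0) (at 0)"
        using tendsto_rabs[OF tendsto_ident_at[of "0::real" UNIV]] by simp
    qed
    then show ?thesis using 1 by (simp add: has_field_derivative_iff)
  next
    case 2
    have "((\<lambda>s. s^2) has_real_derivative 2 * t) (at t)"
      by (auto intro!: derivative_eq_intros)
    then have "((\<lambda>s. (max 0 s)^2) has_real_derivative 2 * t) (at t)"
      by (rule has_field_derivative_transform_within_open[of _ _ _ "{0<..}"]) (use 2 in auto)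
    then show ?thesis using 2 by simp
  next
    case 3
    have "((\<lambda>s. 0::real) has_real_derivative 0) (at t)" by simp
    then have "((\<lambda>s. (max 0 s)^2) has_real_derivative 0) (at t)"
      by (rule has_field_derivative_transform_within_open[of _ _ _ "{..<0}"]) (use 3 in auto)
    then show ?thesis using 3 by simp
  qed
qed

definition smooth_step :: "real \<Rightarrow> real" where
  "smooth_step t = 2 * ((max 0 t)^2 - 2 * (max 0 (t - 1/2))^2 + (max 0 (t - 1))^2)"

definition smooth_step' :: "real \<Rightarrow> real" where
  "smooth_step' t = 2 * (2 * max 0 t - 4 * max 0 (t - 1/2) + 2 * max 0 (t - 1))"

lemma has_real_derivative_smooth_step: "(smooth_step has_real_derivative smooth_step' t) (at t)"
proof -
  have shifted: "((\<lambda>t. (max 0 (t - c))^2) has_real_derivative 2 * max 0 (t - c)) (at t)" for c :: real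
  proof -
    have "((\<lambda>t. t - c) has_real_derivative 1) (at t)" by (auto intro!: derivative_eq_intros)
    from DERIV_chain2[OF has_real_derivative_pos_part_sq[of "t - c"] this] show ?thesis by simp
  qed
  have "((\<lambda>t. 2 * ((max 0 t)^2 - 2 * (max 0 (t - 1/2))^2 + (max 0 (t - 1))^2)) has_real_derivative
     2 * (2 * max 0 t - 2 * (2 * max 0 (t - 1/2)) + 2 * max 0 (t - 1))) (at t)"
    by (intro DERIV_cmult DERIV_add DERIV_diff has_real_derivative_pos_part_sq shifted)
  then show ?thesis unfolding smooth_step_def[abs_def] smooth_step'_def by simp
qed

lemma continuous_on_smooth_step': "continuous_on UNIV smooth_step'"
  unfolding smooth_step'_def[abs_def] by (intro continuous_intros)

lemma smooth_step_eq_0: "t \<le> 0 \<Longrightarrow> smooth_step t = 0"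
  by (simp add: smooth_step_def)

lemma smooth_step_eq_1: "t \<ge> 1 \<Longrightarrow> smooth_step t = 1"
  by (simp add: smooth_step_def max_def power2_eq_square algebra_simps)

lemma smooth_step_bounds: "0 \<le> smooth_step t" "smooth_step t \<le> 1"
proof -
  consider "t \<le> 0" | "0 < t" "t \<le> 1/2" | "1/2 < t" "t < 1" | "1 \<le> t" by linarith
  then have "0 \<le> smooth_step t \<and> smooth_step t \<le> 1"
  proof cases
    case 2
    then have "smooth_step t = 2 * t^2" by (simp add: smooth_step_def max_def)
    moreover have "t^2 \<le> 1/4" using 2 power_mono[of t "1/2" 2] by (simp add: power2_eq_square)
    ultimately show ?thesis by simp
  next
    case 3
    then have "smooth_step t = 1 - 2 * (1 - t)^2"
      by (simp add: smooth_step_def max_def power2_eq_square algebra_simps)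
    moreover have "(1 - t)^2 \<le> 1/4" using 3 power_mono[of "1 - t" "1/2" 2] by (simp add: power2_eq_square)
    ultimately show ?thesis by simp
  qed (auto simp: smooth_step_eq_0 smooth_step_eq_1)
  then show "0 \<le> smooth_step t" "smooth_step t \<le> 1" by auto
qed

lemma smooth_step_eventually_0:
  assumes "0 < d" "0 \<le> M"
  shows "eventually (\<lambda>n. smooth_step (1 - (real n + M) * d) = 0) sequentially"
proof -
  obtain N :: nat where N: "1 / d \<le> real N" using real_arch_simple by blast
  have "smooth_step (1 - (real n + M) * d) = 0" if "n \<ge> N" for n
  proof -
    have "1 / d \<le> real n + M" using N that assms(2) by linarith
    then have "1 \<le> (real n + M) * d" using assms(1) by (simp add: field_simps)
    then show ?thesis by (intro smooth_step_eq_0) simp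
  qed
  then show ?thesis by (auto simp: eventually_sequentially)
qed

definition box_bump :: "real \<Rightarrow> real^'n::finite \<Rightarrow> real^'n \<Rightarrow> real^'n \<Rightarrow> real" where
  "box_bump m a b x =
     (\<Prod>j\<in>UNIV. smooth_step (m * x$j + (1 - m * a$j)) * smooth_step ((- m) * x$j + (m * b$j + 1)))"

lemma C1_grad_box_bump: "\<exists>d. C1_grad (box_bump m a b) d"
proof -
  note coord = C1_grad_compose_coordinate[OF has_real_derivative_smooth_step continuous_on_smooth_step']
  have "\<exists>d. C1_grad (\<lambda>x. \<Prod>j\<in>UNIV.
      smooth_step (m * x$j + (1 - m * a$j)) * smooth_step ((- m) * x$j + (m * b$j + 1))) d"
  proof (rule C1_grad_prod)
    fix j
    show "\<exists>d. C1_grad (\<lambda>x. smooth_step (m * x$j + (1 - m * a$j)) * smooth_step ((- m) * x$j + (m * b$j + 1))) d"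
      using C1_grad_mult[OF coord[of m j "1 - m * a$j"] coord[of "- m" j "m * b$j + 1"]] by blast
  qed simp
  then show ?thesis by (simp add: box_bump_def[abs_def])
qed

lemma box_bump_bounds: "0 \<le> box_bump m a b x" "box_bump m a b x \<le> 1"
  unfolding box_bump_def using smooth_step_bounds
  by (auto intro!: prod_nonneg prod_le_1 mult_le_one)

lemma box_bump_nonzero_imp_mem:
  assumes "box_bump m a b x \<noteq> 0" "m > 0"
  shows "x \<in> cbox (a - (1/m) *\<^sub>R 1) (b + (1/m) *\<^sub>R 1)"
proof -
  have "\<forall>j. smooth_step (m * x$j + (1 - m * a$j)) \<noteq> 0 \<and> smooth_step ((- m) * x$j + (m * b$j + 1)) \<noteq> 0"
    using assms(1) unfolding box_bump_def by auto
  then have "\<forall>j. m * x$j + (1 - m * a$j) > 0 \<and> (- m) * x$j + (m * b$j + 1) > 0"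
    using smooth_step_eq_0 by (metis not_le)
  then have "\<forall>j. a$j - 1/m \<le> x$j \<and> x$j \<le> b$j + 1/m"
    using assms(2) by (auto simp: field_simps) (meson less_imp_le)+
  then show ?thesis by (auto simp: mem_box_cart)
qed

lemma box_bump_tendsto_indicator:
  assumes "0 \<le> M"
  shows "(\<lambda>n. box_bump (real n + M) a b x) \<longlonglongrightarrow> indicator (cbox a b) x"
proof (cases "x \<in> cbox a b")
  case True
  then have x: "\<forall>j. a$j \<le> x$j \<and> x$j \<le> b$j" by (auto simp: mem_box_cart)
  have "box_bump m a b x = 1" if "0 \<le> m" for m
  proof -
    have "\<forall>j. m * x$j + (1 - m * a$j) \<ge> 1 \<and> (- m) * x$j + (m * b$j + 1) \<ge> 1"
      using x that by (auto simp: algebra_simps intro: mult_left_mono)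
    then show ?thesis unfolding box_bump_def by (simp add: smooth_step_eq_1)
  qed
  then have "box_bump (real n + M) a b x = 1" for n using assms by simp
  then show ?thesis using True by simp
next
  case False
  then obtain j where "x$j < a$j \<or> b$j < x$j" by (auto simp: mem_box_cart not_le)
  then have "eventually (\<lambda>n. smooth_step ((real n + M) * x$j + (1 - (real n + M) * a$j)) *
      smooth_step ((- (real n + M)) * x$j + ((real n + M) * b$j + 1)) = 0) sequentially"
  proof
    assume "x$j < a$j"
    then have "eventually (\<lambda>n. smooth_step (1 - (real n + M) * (a$j - x$j)) = 0) sequentially"
      using smooth_step_eventually_0[OF _ assms] by simp
    then show ?thesis by eventually_elim (simp add: algebra_simps)
  next
    assume "b$j < x$j"
    then have "eventually (\<lambda>n. smooth_step (1 - (real n + M) * (x$j - b$j)) = 0) sequentially"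
      using smooth_step_eventually_0[OF _ assms] by simp
    then show ?thesis by eventually_elim (simp add: algebra_simps)
  qed
  then have "eventually (\<lambda>n. box_bump (real n + M) a b x = 0) sequentially"
    by eventually_elim (auto simp: box_bump_def intro: prod_zero)
  then show ?thesis using False by (simp add: tendsto_eventually)
qed

lemma cbox_thickening_subset_open:
  fixes a b :: "real^'n::finite"
  assumes ab: "cbox a b \<noteq> {}" "cbox a b \<subseteq> \<Omega>" and O: "open \<Omega>"
  obtains r where "r > 0" "cbox (a - r *\<^sub>R 1) (b + r *\<^sub>R 1) \<subseteq> \<Omega>"
proof -
  obtain e where e: "e > 0" "(\<Union>x\<in>cbox a b. ball x e) \<subseteq> \<Omega>"
    using compact_subset_open_imp_ball_epsilon_subset[OF compact_cbox O ab(2)] by blast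
  define r where "r = e / (2 * real CARD('n))"
  have r: "r > 0" using e by (simp add: r_def)
  have le: "\<forall>j. a$j \<le> b$j" using ab(1) interval_ne_empty_cart(1) by blast
  have "y \<in> \<Omega>" if y: "y \<in> cbox (a - r *\<^sub>R 1) (b + r *\<^sub>R 1)" for y
  proof -
    define x where "x = (\<chi> j. max (a$j) (min (b$j) (y$j)))"
    have xin: "x \<in> cbox a b" using le by (auto simp: x_def mem_box_cart)
    have yj: "a$j - r \<le> y$j \<and> y$j \<le> b$j + r" for j using y by (auto simp: mem_box_cart)
    have cj: "\<bar>(y - x)$j\<bar> \<le> r" for j using yj[of j] le[rule_format, of j] r by (auto simp: x_def)
    have "(\<Sum>j\<in>UNIV. \<bar>(y - x)$j\<bar>) \<le> (\<Sum>j\<in>(UNIV::'n set). r)" by (intro sum_mono cj)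
    then have "norm (y - x) \<le> (\<Sum>j\<in>(UNIV::'n set). r)"
      using norm_le_l1_cart[of "y - x"] by linarith
    also have "\<dots> = real CARD('n) * r" by simp
    also have "\<dots> < e" using e by (simp add: r_def)
    finally have "y \<in> ball x e" by (simp add: dist_norm norm_minus_commute)
    then show ?thesis using e xin by blast
  qed
  then show ?thesis using that r by blast
qed

lemma integrable_scaleR_bounded_right:
  fixes f :: "'a \<Rightarrow> real" and F :: "'a \<Rightarrow> 'b::{banach, second_countable_topology}"
  assumes "integrable M f" "F \<in> borel_measurable M" "\<And>x. norm (F x) \<le> B"
  shows "integrable M (\<lambda>x. f x *\<^sub>R F x)"
proof (rule Bochner_Integration.integrable_bound[of _ "\<lambda>x. B * f x"])
  show "integrable M (\<lambda>x. B * f x)" using assms(1) by simp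
  show "(\<lambda>x. f x *\<^sub>R F x) \<in> borel_measurable M"
    using assms(1,2) borel_measurable_integrable by measurable
  have B0: "0 \<le> B" using assms(3) norm_ge_zero order_trans by blast
  show "AE x in M. norm (f x *\<^sub>R F x) \<le> norm (B * f x)"
  proof (intro always_eventually allI)
    fix x
    have "\<bar>f x\<bar> * norm (F x) \<le> \<bar>f x\<bar> * B" by (rule mult_left_mono[OF assms(3)]) simp
    then show "norm (f x *\<^sub>R F x) \<le> norm (B * f x)" using B0 by (simp add: abs_mult mult.commute)
  qed
qed

lemma integrable_scaleR_bounded_left:
  fixes f :: "'a \<Rightarrow> real" and F :: "'a \<Rightarrow> 'b::{banach, second_countable_topology}"
  assumes "integrable M F" "f \<in> borel_measurable M" "\<And>x. \<bar>f x\<bar> \<le> B"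
  shows "integrable M (\<lambda>x. f x *\<^sub>R F x)"
proof (rule Bochner_Integration.integrable_bound[of _ "\<lambda>x. B *\<^sub>R F x"])
  show "integrable M (\<lambda>x. B *\<^sub>R F x)" using assms(1) by simp
  show "(\<lambda>x. f x *\<^sub>R F x) \<in> borel_measurable M"
    using assms(1,2) borel_measurable_integrable by measurable
  have B0: "0 \<le> B" using assms(3) abs_ge_zero order_trans by blast
  show "AE x in M. norm (f x *\<^sub>R F x) \<le> norm (B *\<^sub>R F x)"
    using assms(3) B0 by (auto intro!: always_eventually mult_right_mono)
qed

lemma measurable_lebesgue_on_continuous:
  fixes g :: "real^'n::finite \<Rightarrow> 'b::euclidean_space"
  assumes "open \<Omega>" "continuous_on \<Omega> g"
  shows "g \<in> borel_measurable (lebesgue_on \<Omega>)"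
  using continuous_imp_measurable_on_sets_lebesgue[OF assms(2)] assms(1) by simp

lemma borel_measurable_indicator_compact:
  fixes K :: "(real^'n::finite) set"
  assumes "open \<Omega>" "compact K" "K \<subseteq> \<Omega>"
  shows "indicator K \<in> borel_measurable (lebesgue_on \<Omega>)"
proof -
  have "K \<in> sets lebesgue"
    using borel_closed[OF compact_imp_closed[OF assms(2)]] by (simp add: sets_completionI_sets)
  then have "K \<in> sets (lebesgue_on \<Omega>)" using assms(1,3) by (subst sets_restrict_space_iff) auto
  then show ?thesis by simp
qed

definition locally_integrable :: "(real^'n::finite) set \<Rightarrow> (real^'n \<Rightarrow> real) \<Rightarrow> bool" where
  "locally_integrable \<Omega> h \<longleftrightarrow> h \<in> borel_measurable (lebesgue_on \<Omega>) \<and>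
     (\<forall>K. compact K \<longrightarrow> K \<subseteq> \<Omega> \<longrightarrow> integrable (lebesgue_on \<Omega>) (\<lambda>x. indicator K x * h x))"

lemma locally_integrable_integrable:
  fixes h :: "real^'n::finite \<Rightarrow> real"
  assumes "open \<Omega>" "integrable (lebesgue_on \<Omega>) h"
  shows "locally_integrable \<Omega> h"
  using integrable_scaleR_bounded_left[OF assms(2) borel_measurable_indicator_compact[OF assms(1)], of _ 1]
    borel_measurable_integrable[OF assms(2)]
  by (auto simp: locally_integrable_def indicator_def)

lemma locally_integrable_continuous:
  fixes h :: "real^'n::finite \<Rightarrow> real"
  assumes "open \<Omega>" "continuous_on \<Omega> h"
  shows "locally_integrable \<Omega> h"
  unfolding locally_integrable_def
proof (intro conjI allI impI)
  show "h \<in> borel_measurable (lebesgue_on \<Omega>)" by (rule measurable_lebesgue_on_continuous[OF assms])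
  fix K :: "(real^'n) set" assume K: "compact K" "K \<subseteq> \<Omega>"
  have "continuous_on K h" using assms(2) K(2) continuous_on_subset by blast
  then have contK: "continuous_on K (\<lambda>x. indicator K x * h x)"
    by (rule continuous_on_eq) (auto simp: indicator_def)
  show "integrable (lebesgue_on \<Omega>) (\<lambda>x. indicator K x * h x)"
    by (rule integrable_lebesgue_on_compact_support(1)[OF _ K contK]) (use assms(1) in auto)
qed

lemma locally_integrable_diff:
  "locally_integrable \<Omega> h1 \<Longrightarrow> locally_integrable \<Omega> h2 \<Longrightarrow> locally_integrable \<Omega> (\<lambda>x. h1 x - h2 x)"
  unfolding locally_integrable_def
  by (auto simp: right_diff_distrib intro!: Bochner_Integration.integrable_diff)

lemma test_fun_bounded:
  assumes "test_fun \<Omega> phi dphi"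
  obtains B where "\<And>x. \<bar>phi x\<bar> \<le> B" "\<And>x. norm (dphi x) \<le> B"
proof -
  have C1: "C1_grad phi dphi" and K: "compact (tsupport phi)" using test_funD[OF assms] by auto
  have "compact (phi ` tsupport phi)" "compact (dphi ` tsupport phi)"
    using K continuous_on_subset[OF C1_grad_continuous[OF C1]] C1
    by (auto simp: C1_grad_def intro!: compact_continuous_image intro: continuous_on_subset)
  then have "bounded (phi ` tsupport phi)" "bounded (dphi ` tsupport phi)" by (auto intro: compact_imp_bounded)
  then obtain B1 B2 where B1: "\<And>x. x \<in> tsupport phi \<Longrightarrow> norm (phi x) \<le> B1"
    and B2: "\<And>x. x \<in> tsupport phi \<Longrightarrow> norm (dphi x) \<le> B2"
    unfolding bounded_iff by auto
  have "\<bar>phi x\<bar> \<le> max 0 (max B1 B2) \<and> norm (dphi x) \<le> max 0 (max B1 B2)" for x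
    using B1[of x] B2[of x] not_in_tsupport[of x phi] test_funD(4)[OF assms, of x]
    by (cases "x \<in> tsupport phi") auto
  then show ?thesis using that by blast
qed

lemma test_fun_measurable:
  assumes "test_fun \<Omega> phi dphi" "open \<Omega>"
  shows "phi \<in> borel_measurable (lebesgue_on \<Omega>)" "dphi \<in> borel_measurable (lebesgue_on \<Omega>)"
  using test_funD(1)[OF assms(1)] C1_grad_continuous continuous_on_subset[of UNIV _ \<Omega>]
    measurable_lebesgue_on_continuous[OF assms(2)]
  by (auto simp: C1_grad_def)

lemma test_fun_box_bump:
  fixes a b :: "real^'n::finite"
  assumes m: "0 < m" and sub: "cbox (a - (1/m) *\<^sub>R 1) (b + (1/m) *\<^sub>R 1) \<subseteq> \<Omega>"
  obtains d where "test_fun \<Omega> (box_bump m a b) d"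
proof -
  obtain d where "C1_grad (box_bump m a b) d" using C1_grad_box_bump by blast
  then have "test_fun \<Omega> (box_bump m a b) d"
    by (rule test_funI[OF _ compact_cbox sub]) (use box_bump_nonzero_imp_mem[OF _ m] in blast)
  then show ?thesis by (rule that)
qed

text \<open>The bumps \<open>box_bump m a b\<close> tend to the indicator of the box and are dominated by the
  indicator of a slightly larger box inside \<open>\<Omega>\<close>.\<close>
lemma integral_cbox_eq_0_if_orthogonal:
  fixes h :: "real^'n::finite \<Rightarrow> real"
  assumes O: "open \<Omega>" and h: "locally_integrable \<Omega> h"
    and orth: "\<And>phi dphi. test_fun \<Omega> phi dphi \<Longrightarrow> (LINT x|lebesgue_on \<Omega>. phi x * h x) = 0"
    and ab: "cbox a b \<subseteq> \<Omega>"
  shows "(LINT x|lebesgue_on \<Omega>. indicator (cbox a b) x * h x) = 0"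
proof (cases "cbox a b = {}")
  case True then show ?thesis by simp
next
  case False
  obtain r where r: "r > 0" "cbox (a - r *\<^sub>R 1) (b + r *\<^sub>R 1) \<subseteq> \<Omega>"
    using cbox_thickening_subset_open[OF False ab O] by blast
  define A where "A = cbox (a - r *\<^sub>R 1) (b + r *\<^sub>R (1::real^'n))"
  obtain M :: nat where M: "1 / r \<le> real M" using real_arch_simple by blast
  define m where "m n = real n + (real M + 1)" for n
  define psi where "psi n = box_bump (m n) a b" for n
  have m: "0 < m n" "1 / m n \<le> r" for n
  proof -
    show "0 < m n" by (simp add: m_def)
    have "1 / r < m n" using M by (simp add: m_def)
    then show "1 / m n \<le> r" using r(1) \<open>0 < m n\<close> by (simp add: field_simps)
  qed
  have in_A: "cbox (a - (1 / m n) *\<^sub>R 1) (b + (1 / m n) *\<^sub>R 1) \<subseteq> A" for n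
    unfolding A_def by (intro subset_interval_imp_cart(1)) (simp add: m(2))
  have test: "\<exists>d. test_fun \<Omega> (psi n) d" for n
    using test_fun_box_bump[OF m(1) order_trans[OF in_A r(2)[folded A_def]]] unfolding psi_def by blast
  have sm: "(\<lambda>x. psi n x * h x) \<in> borel_measurable (lebesgue_on \<Omega>)" for n
    using test[of n] test_fun_measurable(1)[OF _ O] h by (auto simp: locally_integrable_def)
  have lim: "(\<lambda>n. psi n x * h x) \<longlonglongrightarrow> indicator (cbox a b) x * h x" for x
    unfolding psi_def m_def by (intro tendsto_mult tendsto_const box_bump_tendsto_indicator) simp
  have wi: "integrable (lebesgue_on \<Omega>) (\<lambda>x. indicator A x * \<bar>h x\<bar>)"
  proof -
    have "integrable (lebesgue_on \<Omega>) (\<lambda>x. indicator A x * h x)"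
      using h r(2) by (auto simp: A_def locally_integrable_def)
    then have "integrable (lebesgue_on \<Omega>) (\<lambda>x. \<bar>indicator A x * h x\<bar>)" by (rule integrable_abs)
    then show ?thesis by (simp add: abs_mult)
  qed
  have bnd: "norm (psi n x * h x) \<le> indicator A x * \<bar>h x\<bar>" for n x
  proof (cases "psi n x = 0")
    case False
    then have "x \<in> A" using box_bump_nonzero_imp_mem[OF _ m(1)] in_A unfolding psi_def by blast
    moreover have "\<bar>psi n x\<bar> \<le> 1" using box_bump_bounds[of _ a b x] by (simp add: psi_def)
    ultimately show ?thesis by (simp add: abs_mult mult_left_le_one_le)
  qed simp
  have "(\<lambda>n. LINT x|lebesgue_on \<Omega>. psi n x * h x) \<longlonglongrightarrow> (LINT x|lebesgue_on \<Omega>. indicator (cbox a b) x * h x)"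
    by (rule integral_dominated_convergence[OF borel_measurable_LIMSEQ_real[OF lim sm] sm wi])
       (use lim bnd in auto)
  moreover have "(LINT x|lebesgue_on \<Omega>. psi n x * h x) = 0" for n using test[of n] orth by blast
  ultimately show ?thesis using LIMSEQ_unique by (simp add: LIMSEQ_const_iff)
qed

lemma density_lborel_eq_if_eq_on_cboxes:
  fixes P N :: "real^'n::finite \<Rightarrow> real"
  assumes P: "integrable lborel P" and N: "N \<in> borel_measurable lborel"
    and eq: "\<And>c d. emeasure (density lborel (\<lambda>x. ennreal (P x))) (cbox c d)
                 = emeasure (density lborel (\<lambda>x. ennreal (N x))) (cbox c d)"
  shows "density lborel (\<lambda>x. ennreal (P x)) = density lborel (\<lambda>x. ennreal (N x))"
proof -
  have Pm[measurable]: "P \<in> borel_measurable lborel" using P by (rule borel_measurable_integrable)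
  have Nm[measurable]: "N \<in> borel_measurable lborel" by (rule N)
  define E where "E = range (\<lambda>(a, b). cbox a (b::real^'n))"
  have sigE: "sets borel = sigma_sets UNIV E"
  proof -
    have "E = range (\<lambda>(a, b). {a..b::real^'n})" unfolding E_def by (simp add: interval_cbox_cart)
    then have "borel = sigma UNIV E" using borel_eq_atLeastAtMost by metis
    then show ?thesis by (metis sets_measure_of top.extremum Pow_UNIV)
  qed
  define A where "A i = cbox (- (real i *\<^sub>R 1)) (real i *\<^sub>R (1::real^'n))" for i :: nat
  have A_UNIV: "(\<Union>i. A i) = UNIV"
  proof -
    have "x \<in> A (nat \<lceil>norm x\<rceil>)" for x :: "real^'n"
    proof -
      have "\<bar>x $ j\<bar> \<le> real (nat \<lceil>norm x\<rceil>)" for j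
        using component_le_norm_cart[of x j] by linarith
      then show ?thesis unfolding A_def mem_box_cart by (auto simp: abs_le_iff) (metis minus_le_iff)
    qed
    then show ?thesis by blast
  qed
  show ?thesis
  proof (rule measure_eqI_generator_eq[where E=E and \<Omega>=UNIV and A=A])
    show "Int_stable E" unfolding E_def
    proof (rule Int_stableI_image)
      fix i j :: "(real^'n) \<times> (real^'n)"
      show "\<exists>k\<in>UNIV. (case i of (a, b) \<Rightarrow> cbox a b) \<inter> (case j of (a, b) \<Rightarrow> cbox a b) = (case k of (a, b) \<Rightarrow> cbox a b)"
        by (cases i; cases j) (auto simp: Int_interval_cart interval_cbox_cart)
    qed
    show "E \<subseteq> Pow UNIV" "range A \<subseteq> E" "(\<Union>i. A i) = UNIV"
      using A_UNIV by (auto simp: E_def A_def)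
    show "\<And>X. X \<in> E \<Longrightarrow> emeasure (density lborel (\<lambda>x. ennreal (P x))) X = emeasure (density lborel (\<lambda>x. ennreal (N x))) X"
      using eq unfolding E_def by auto
    show "sets (density lborel (\<lambda>x. ennreal (P x))) = sigma_sets UNIV E"
      "sets (density lborel (\<lambda>x. ennreal (N x))) = sigma_sets UNIV E" using sigE by simp_all
    show "emeasure (density lborel (\<lambda>x. ennreal (P x))) (A i) \<noteq> \<infinity>" for i
    proof -
      have "emeasure (density lborel (\<lambda>x. ennreal (P x))) (A i) \<le> emeasure (density lborel (\<lambda>x. ennreal (P x))) UNIV"
        by (rule emeasure_mono) auto
      also have "\<dots> = (\<integral>\<^sup>+x. ennreal (P x) \<partial>lborel)" by (simp add: emeasure_density)
      also have "\<dots> \<le> (\<integral>\<^sup>+x. ennreal (norm (P x)) \<partial>lborel)" by (intro nn_integral_mono) simp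
      also have "\<dots> < \<infinity>" using P unfolding integrable_iff_bounded by blast
      finally show ?thesis by simp
    qed
  qed
qed

text \<open>Comparing the densities of the positive and negative parts of \<open>G\<close> on boxes.\<close>
lemma AE_zero_if_cbox_integrals_zero:
  fixes G :: "real^'n::finite \<Rightarrow> real"
  assumes G: "integrable lborel G"
    and z: "\<And>c d. (LINT x|lborel. indicator (cbox c d) x * G x) = 0"
  shows "AE x in lborel. G x = 0"
proof -
  define P where "P x = max 0 (G x)" for x
  define N where "N x = max 0 (- G x)" for x
  have Pi: "integrable lborel P" unfolding P_def using G by (intro integrable_max) auto
  have Ni: "integrable lborel N" unfolding N_def using G by (intro integrable_max) auto
  have Pm[measurable]: "P \<in> borel_measurable lborel" using Pi by (rule borel_measurable_integrable)
  have Nm[measurable]: "N \<in> borel_measurable lborel" using Ni by (rule borel_measurable_integrable)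
  have nonneg: "0 \<le> P x" "0 \<le> N x" for x by (simp_all add: P_def N_def)
  have box_density: "emeasure (density lborel (\<lambda>x. ennreal (F x))) (cbox c d)
      = ennreal (LINT x|lborel. indicator (cbox c d) x * F x)"
    if F: "integrable lborel F" "\<And>x. 0 \<le> F x" for F :: "real^'n \<Rightarrow> real" and c d
  proof -
    have [measurable]: "F \<in> borel_measurable lborel" using F(1) by (rule borel_measurable_integrable)
    have "integrable lborel (\<lambda>x. indicator (cbox c d) x * F x)"
      using integrable_mult_indicator[of "cbox c d" lborel F] F(1) by simp
    then have "(\<integral>\<^sup>+x. ennreal (indicator (cbox c d) x * F x) \<partial>lborel)
        = ennreal (LINT x|lborel. indicator (cbox c d) x * F x)"
      by (rule nn_integral_eq_integral) (simp add: F(2))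
    moreover have "emeasure (density lborel (\<lambda>x. ennreal (F x))) (cbox c d)
        = (\<integral>\<^sup>+x. ennreal (indicator (cbox c d) x * F x) \<partial>lborel)"
      by (subst emeasure_density) (auto intro!: nn_integral_cong simp: indicator_def)
    ultimately show ?thesis by simp
  qed
  have "(LINT x|lborel. indicator (cbox c d) x * P x) = (LINT x|lborel. indicator (cbox c d) x * N x)" for c d
  proof -
    have iP: "integrable lborel (\<lambda>x. indicator (cbox c d) x * P x)"
      and iN: "integrable lborel (\<lambda>x. indicator (cbox c d) x * N x)"
      using integrable_mult_indicator[of "cbox c d" lborel P] integrable_mult_indicator[of "cbox c d" lborel N]
        Pi Ni by simp_all
    have "(LINT x|lborel. indicator (cbox c d) x * P x) - (LINT x|lborel. indicator (cbox c d) x * N x)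
        = (LINT x|lborel. indicator (cbox c d) x * G x)"
      by (subst Bochner_Integration.integral_diff[OF iP iN, symmetric])
         (auto intro!: Bochner_Integration.integral_cong simp: P_def N_def indicator_def max_def)
    then show ?thesis using z by simp
  qed
  then have "density lborel (\<lambda>x. ennreal (P x)) = density lborel (\<lambda>x. ennreal (N x))"
    by (intro density_lborel_eq_if_eq_on_cboxes Pi Nm)
       (simp add: box_density[OF Pi nonneg(1)] box_density[OF Ni nonneg(2)])
  then have "AE x in lborel. ennreal (P x) = ennreal (N x)"
    using sigma_finite_measure.density_unique_iff[OF sigma_finite_lborel,
        of "\<lambda>x. ennreal (P x)" "\<lambda>x. ennreal (N x)"] by simp
  then show ?thesis
    by eventually_elim (auto simp: P_def N_def max_def split: if_splits)
qed

lemma AE_zero_if_cbox_integrals_zero_lebesgue: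
  fixes H :: "real^'n::finite \<Rightarrow> real"
  assumes Hm: "H \<in> borel_measurable lebesgue" and Hi: "integrable lebesgue H"
    and z: "\<And>c d. (LINT x|lebesgue. indicator (cbox c d) x * H x) = 0"
  shows "AE x in lebesgue. H x = 0"
proof -
  obtain G where Gb: "G \<in> borel_measurable lborel" and HG: "AE x in lborel. H x = G x"
    using completion_ex_borel_measurable_real[OF Hm] by blast
  have Gm: "G \<in> borel_measurable lebesgue" using Gb by (rule measurable_completion)
  have HGc: "AE x in lebesgue. H x = G x" using HG by (rule AE_completion)
  have "integrable lebesgue G" using Hi integrable_cong_AE[OF Hm Gm HGc] by simp
  then have Gi: "integrable lborel G" using integrable_completion[OF Gb] by simp
  have "(LINT x|lborel. indicator (cbox c d) x * G x) = 0" for c d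
  proof -
    have [measurable]: "cbox c d \<in> sets lebesgue" by simp
    have "(\<lambda>x. indicator (cbox c d) x * G x) \<in> borel_measurable lborel" using Gb by measurable
    then have "(LINT x|lborel. indicator (cbox c d) x * G x) = (LINT x|lebesgue. indicator (cbox c d) x * G x)"
      by (rule integral_completion[symmetric])
    also have "\<dots> = (LINT x|lebesgue. indicator (cbox c d) x * H x)"
    proof (rule integral_cong_AE)
      show "(\<lambda>x. indicator (cbox c d) x * G x) \<in> borel_measurable lebesgue" using Gm by measurable
      show "(\<lambda>x. indicator (cbox c d) x * H x) \<in> borel_measurable lebesgue" using Hm by measurable
      show "AE x in lebesgue. indicator (cbox c d) x * G x = indicator (cbox c d) x * H x"
        using HGc by eventually_elim simp
    qed
    finally show ?thesis using z by simp
  qed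
  then have "AE x in lborel. G x = 0" by (rule AE_zero_if_cbox_integrals_zero[OF Gi])
  then have "AE x in lborel. H x = 0" using HG by eventually_elim simp
  then show ?thesis by (rule AE_completion)
qed

lemma AE_zero_on_cbox_if_orthogonal:
  fixes h :: "real^'n::finite \<Rightarrow> real"
  assumes O: "open \<Omega>" and h: "locally_integrable \<Omega> h"
    and orth: "\<And>phi dphi. test_fun \<Omega> phi dphi \<Longrightarrow> (LINT x|lebesgue_on \<Omega>. phi x * h x) = 0"
    and Q: "cbox a b \<subseteq> \<Omega>"
  shows "AE x in lebesgue. x \<in> cbox a b \<longrightarrow> h x = 0"
proof -
  have Osets: "\<Omega> \<in> sets lebesgue" using O by simp
  define H where "H x = indicator \<Omega> x *\<^sub>R (indicator (cbox a b) x * h x)" for x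
  have hQ: "integrable (lebesgue_on \<Omega>) (\<lambda>x. indicator (cbox a b) x * h x)"
    using h Q by (simp add: locally_integrable_def)
  then have Hi: "integrable lebesgue H"
    unfolding H_def by (subst (asm) integrable_restrict_space) (auto simp: Osets)
  from borel_measurable_integrable[OF hQ] have Hm: "H \<in> borel_measurable lebesgue"
    unfolding H_def by (subst (asm) borel_measurable_restrict_space_iff) (auto simp: Osets)
  have "(LINT x|lebesgue. indicator (cbox c d) x * H x) = 0" for c d
  proof -
    obtain c' d' where cd: "cbox c d \<inter> cbox a b = cbox c' d'"
      unfolding Int_interval_cart interval_cbox_cart by blast
    have "(LINT x|lebesgue. indicator (cbox c d) x * H x)
        = (LINT x|lebesgue. indicator \<Omega> x *\<^sub>R (indicator (cbox c' d') x * h x))"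
      unfolding cd[symmetric] by (rule Bochner_Integration.integral_cong) (auto simp: H_def indicator_def)
    also have "\<dots> = (LINT x|lebesgue_on \<Omega>. indicator (cbox c' d') x * h x)"
      by (rule integral_restrict_space[symmetric]) (simp add: Osets)
    also have "\<dots> = 0"
      by (rule integral_cbox_eq_0_if_orthogonal[OF O h orth]) (use cd Q in auto)
    finally show ?thesis .
  qed
  then have "AE x in lebesgue. H x = 0" by (rule AE_zero_if_cbox_integrals_zero_lebesgue[OF Hm Hi])
  then show ?thesis by eventually_elim (use Q in \<open>auto simp: H_def indicator_def split: if_splits\<close>)
qed

text \<open>Du Bois-Reymond lemma: \<open>{x \<in> \<Omega>. h x \<noteq> 0}\<close> is locally negligible.\<close>
lemma AE_zero_if_orthogonal_to_test_funs:
  fixes h :: "real^'n::finite \<Rightarrow> real"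
  assumes O: "open \<Omega>" and h: "locally_integrable \<Omega> h"
    and orth: "\<And>phi dphi. test_fun \<Omega> phi dphi \<Longrightarrow> (LINT x|lebesgue_on \<Omega>. phi x * h x) = 0"
  shows "AE x in lebesgue_on \<Omega>. h x = 0"
proof -
  define S where "S = {x \<in> \<Omega>. h x \<noteq> 0}"
  have "\<exists>U. openin (top_of_set S) U \<and> x0 \<in> U \<and> negligible U" if x0: "x0 \<in> S" for x0
  proof -
    have "cbox x0 x0 \<noteq> {}" "cbox x0 x0 \<subseteq> \<Omega>" using x0 by (auto simp: S_def)
    then obtain r where r: "r > 0" "cbox (x0 - r *\<^sub>R 1) (x0 + r *\<^sub>R 1) \<subseteq> \<Omega>"
      using cbox_thickening_subset_open[OF _ _ O] by blast
    have "AE x in lebesgue. x \<in> cbox (x0 - r *\<^sub>R 1) (x0 + r *\<^sub>R 1) \<longrightarrow> h x = 0"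
      by (rule AE_zero_on_cbox_if_orthogonal[OF O h orth r(2)])
    then obtain N where N: "{x \<in> space lebesgue. \<not> (x \<in> cbox (x0 - r *\<^sub>R 1) (x0 + r *\<^sub>R 1) \<longrightarrow> h x = 0)} \<subseteq> N"
      "emeasure lebesgue N = 0" "N \<in> sets lebesgue"
      by (rule AE_E)
    define U where "U = S \<inter> box (x0 - r *\<^sub>R 1) (x0 + r *\<^sub>R (1::real^'n))"
    have "U \<subseteq> N" using N(1) box_subset_cbox by (fastforce simp: U_def S_def)
    moreover have "negligible N" using N(2,3) by (simp add: negligible_iff_null_sets null_sets_def)
    ultimately have "negligible U" using negligible_subset by blast
    moreover have "openin (top_of_set S) U" unfolding U_def by (rule openin_open_Int) (rule open_box)
    moreover have "x0 \<in> U" using x0 r(1) by (auto simp: U_def mem_box_cart)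
    ultimately show ?thesis by blast
  qed
  then have "negligible S" using locally_negligible_alt by blast
  then have "AE x in lebesgue. x \<notin> S" by (simp add: negligible_iff_null_sets AE_not_in)
  then have "AE x in lebesgue. x \<in> \<Omega> \<longrightarrow> h x = 0" by eventually_elim (auto simp: S_def)
  then show ?thesis using O by (subst AE_restrict_space_iff) auto
qed

lemma AE_eq_if_same_test_integrals:
  fixes h1 h2 :: "real^'n::finite \<Rightarrow> real"
  assumes O: "open \<Omega>" and h1: "integrable (lebesgue_on \<Omega>) h1" and h2: "locally_integrable \<Omega> h2"
    and eq: "\<And>phi dphi. test_fun \<Omega> phi dphi \<Longrightarrow>
               (LINT x|lebesgue_on \<Omega>. phi x * h1 x) = (LINT x|lebesgue_on \<Omega>. phi x * h2 x)"
  shows "AE x in lebesgue_on \<Omega>. h1 x = h2 x"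
proof -
  have "AE x in lebesgue_on \<Omega>. h1 x - h2 x = 0"
  proof (rule AE_zero_if_orthogonal_to_test_funs[OF O])
    show "locally_integrable \<Omega> (\<lambda>x. h1 x - h2 x)"
      by (rule locally_integrable_diff[OF locally_integrable_integrable[OF O h1] h2])
  next
    fix phi dphi assume t: "test_fun \<Omega> phi dphi"
    obtain B where B: "\<And>x. \<bar>phi x\<bar> \<le> B" using test_fun_bounded[OF t] by blast
    have pm: "phi \<in> borel_measurable (lebesgue_on \<Omega>)" using test_fun_measurable[OF t O] by simp
    have i1: "integrable (lebesgue_on \<Omega>) (\<lambda>x. phi x * h1 x)"
      using integrable_scaleR_bounded_left[OF h1 pm B] by simp
    have "integrable (lebesgue_on \<Omega>) (\<lambda>x. indicator (tsupport phi) x * h2 x)"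
      using h2 test_funD(2,3)[OF t] by (simp add: locally_integrable_def)
    from integrable_scaleR_bounded_left[OF this pm B]
    have "integrable (lebesgue_on \<Omega>) (\<lambda>x. phi x * (indicator (tsupport phi) x * h2 x))" by simp
    moreover have "(\<lambda>x. phi x * (indicator (tsupport phi) x * h2 x)) = (\<lambda>x. phi x * h2 x)"
      by (auto simp: fun_eq_iff indicator_def not_in_tsupport)
    ultimately have i2: "integrable (lebesgue_on \<Omega>) (\<lambda>x. phi x * h2 x)" by simp
    show "(LINT x|lebesgue_on \<Omega>. phi x * (h1 x - h2 x)) = 0"
      using Bochner_Integration.integral_diff[OF i1 i2] eq[OF t] by (simp add: algebra_simps)
  qed
  then show ?thesis by eventually_elim simp
qed

section \<open>\<open>L\<^sup>2\<close> functions and weak derivatives\<close>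

lemma integrable_const_lebesgue_on_bounded:
  fixes \<Omega> :: "(real^'n::finite) set"
  assumes "open \<Omega>" "bounded \<Omega>"
  shows "integrable (lebesgue_on \<Omega>) (\<lambda>x. c::real)"
proof -
  have "\<Omega> \<in> lmeasurable" using assms by (intro bounded_set_imp_lmeasurable) auto
  then interpret finite_measure "lebesgue_on \<Omega>" by (rule finite_measure_lebesgue_on)
  show ?thesis by simp
qed

lemma abs_le_1_plus_sq: "\<bar>a::real\<bar> \<le> 1 + a^2"
proof (cases "\<bar>a\<bar> \<le> 1")
  case True then show ?thesis by (simp add: add_increasing2)
next
  case False
  then have "\<bar>a\<bar> \<le> \<bar>a\<bar> * \<bar>a\<bar>" using mult_right_mono[of 1 "\<bar>a\<bar>" "\<bar>a\<bar>"] by simp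
  also have "\<dots> = a^2" by (simp add: power2_eq_square abs_mult_self_eq)
  finally show ?thesis by simp
qed

lemma L2_integrable:
  fixes \<Omega> :: "(real^'n::finite) set"
  assumes "open \<Omega>" "bounded \<Omega>" "L2 \<Omega> u"
  shows "integrable (lebesgue_on \<Omega>) u"
proof (rule Bochner_Integration.integrable_bound[of _ "\<lambda>x. 1 + (u x)^2"])
  show "integrable (lebesgue_on \<Omega>) (\<lambda>x. 1 + (u x)^2)"
    using integrable_const_lebesgue_on_bounded[OF assms(1,2)] assms(3) by (auto simp: L2_def)
  show "u \<in> borel_measurable (lebesgue_on \<Omega>)" using assms(3) by (simp add: L2_def)
  show "AE x in lebesgue_on \<Omega>. norm (u x) \<le> norm (1 + (u x)^2)"
    using abs_le_1_plus_sq by (auto intro!: always_eventually)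
qed

lemma L2v_integrable:
  fixes \<Omega> :: "(real^'n::finite) set"
  assumes "open \<Omega>" "bounded \<Omega>" "L2v \<Omega> w"
  shows "integrable (lebesgue_on \<Omega>) w"
proof (rule Bochner_Integration.integrable_bound[of _ "\<lambda>x. 1 + (norm (w x))^2"])
  show "integrable (lebesgue_on \<Omega>) (\<lambda>x. 1 + (norm (w x))^2)"
    using integrable_const_lebesgue_on_bounded[OF assms(1,2)] assms(3) by (auto simp: L2v_def)
  show "w \<in> borel_measurable (lebesgue_on \<Omega>)" using assms(3) by (simp add: L2v_def)
  show "AE x in lebesgue_on \<Omega>. norm (w x) \<le> norm (1 + (norm (w x))^2)"
    using abs_le_1_plus_sq[of "norm (w x)" for x] by (auto intro!: always_eventually)
qed

lemma borel_measurable_vec_component: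
  fixes F :: "'a \<Rightarrow> real^'n::finite"
  assumes "F \<in> borel_measurable M"
  shows "(\<lambda>x. F x $ k) \<in> borel_measurable M"
  using measurable_compose[OF assms borel_measurable_nth] .

lemma AE_lebesgue_on_mem: "AE x in lebesgue_on \<Omega>. x \<in> \<Omega>"
  by (rule AE_I2) (simp add: space_restrict_space)

lemma AE_vec_eqI:
  fixes A B :: "'a \<Rightarrow> real^'n::finite"
  assumes "\<And>k. AE x in M. A x $ k = B x $ k"
  shows "AE x in M. A x = B x"
proof -
  have "AE x in M. \<forall>k\<in>UNIV. A x $ k = B x $ k" by (rule AE_finite_allI) (use assms in auto)
  then show ?thesis by eventually_elim (simp add: vec_eq_iff)
qed

lemma is_weak_grad_wgrad: "H1 \<Omega> u \<Longrightarrow> is_weak_grad \<Omega> u (wgrad \<Omega> u)"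
  unfolding H1_def wgrad_def by (metis someI)

lemma is_weak_div_wdiv: "Hdiv \<Omega> w \<Longrightarrow> is_weak_div \<Omega> w (wdiv \<Omega> w)"
  unfolding Hdiv_def wdiv_def by (metis someI)

lemma H1_zero: "H1 \<Omega> (\<lambda>x. 0)"
proof -
  have "is_weak_grad \<Omega> (\<lambda>x. 0) (\<lambda>x. 0)" by (simp add: is_weak_grad_def L2v_def)
  then show ?thesis by (auto simp: H1_def L2_def)
qed

lemma Hdiv_zero: "Hdiv \<Omega> (\<lambda>x. 0)"
proof -
  have "is_weak_div \<Omega> (\<lambda>x. 0) (\<lambda>x. 0)" by (simp add: is_weak_div_def L2_def)
  then show ?thesis by (auto simp: Hdiv_def L2v_def)
qed

lemma is_weak_grad_component:
  fixes u :: "real^'n::finite \<Rightarrow> real"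
  assumes O: "open \<Omega>" "bounded \<Omega>" and wg: "is_weak_grad \<Omega> u g" and u: "L2 \<Omega> u"
    and t: "test_fun \<Omega> phi dphi"
  shows "(LINT x|lebesgue_on \<Omega>. u x * dphi x $ k) = - (LINT x|lebesgue_on \<Omega>. phi x * g x $ k)"
proof -
  have iu: "integrable (lebesgue_on \<Omega>) u" by (rule L2_integrable[OF O u])
  have ig: "integrable (lebesgue_on \<Omega>) g" using wg L2v_integrable[OF O] by (auto simp: is_weak_grad_def)
  obtain B where B: "\<And>x. \<bar>phi x\<bar> \<le> B" "\<And>x. norm (dphi x) \<le> B" using test_fun_bounded[OF t] by blast
  note pm = test_fun_measurable[OF t O(1)]
  have i1: "integrable (lebesgue_on \<Omega>) (\<lambda>x. u x *\<^sub>R dphi x)"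
    by (rule integrable_scaleR_bounded_right[OF iu pm(2) B(2)])
  have i2: "integrable (lebesgue_on \<Omega>) (\<lambda>x. phi x *\<^sub>R g x)"
    by (rule integrable_scaleR_bounded_left[OF ig pm(1) B(1)])
  have "(LINT x|lebesgue_on \<Omega>. u x * dphi x $ k) = (LINT x|lebesgue_on \<Omega>. u x *\<^sub>R dphi x) $ k"
    using integral_bounded_linear[OF bounded_linear_vec_nth i1, of k] by simp
  also have "\<dots> = - ((LINT x|lebesgue_on \<Omega>. phi x *\<^sub>R g x) $ k)"
    using wg t by (auto simp: is_weak_grad_def)
  also have "(LINT x|lebesgue_on \<Omega>. phi x *\<^sub>R g x) $ k = (LINT x|lebesgue_on \<Omega>. phi x * g x $ k)"
    using integral_bounded_linear[OF bounded_linear_vec_nth i2, of k] by simp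
  finally show ?thesis .
qed

lemma L2_bounded:
  fixes \<Omega> :: "(real^'n::finite) set"
  assumes O: "open \<Omega>" "bounded \<Omega>" and m: "u \<in> borel_measurable (lebesgue_on \<Omega>)"
    and B: "\<And>x. \<bar>u x\<bar> \<le> B"
  shows "L2 \<Omega> u"
  unfolding L2_def
proof
  show "integrable (lebesgue_on \<Omega>) (\<lambda>x. (u x)^2)"
  proof (rule Bochner_Integration.integrable_bound[OF integrable_const_lebesgue_on_bounded[OF O, of "B^2"]])
    show "(\<lambda>x. (u x)^2) \<in> borel_measurable (lebesgue_on \<Omega>)" using m by measurable
    have "(u x)^2 \<le> B^2" for x using B[of x] abs_le_square_iff[of "u x" B] by fastforce
    then show "AE x in lebesgue_on \<Omega>. norm ((u x)^2) \<le> norm (B^2)" by auto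
  qed
qed (rule m)

lemma test_fun_L2:
  assumes O: "open \<Omega>" "bounded \<Omega>" and t: "test_fun \<Omega> phi dphi"
  shows "L2 \<Omega> phi" "L2v \<Omega> dphi" "L2 \<Omega> (\<lambda>x. dphi x $ k)"
proof -
  obtain B where B: "\<And>x. \<bar>phi x\<bar> \<le> B" "\<And>x. norm (dphi x) \<le> B" using test_fun_bounded[OF t] by blast
  note pm = test_fun_measurable[OF t O(1)]
  show "L2 \<Omega> phi" by (rule L2_bounded[OF O pm(1) B(1)])
  show "L2 \<Omega> (\<lambda>x. dphi x $ k)"
    by (rule L2_bounded[OF O borel_measurable_vec_component[OF pm(2)]])
       (use B(2) component_le_norm_cart order_trans in blast)
  have "L2 \<Omega> (\<lambda>x. norm (dphi x))" by (rule L2_bounded[OF O _ ]) (use pm(2) B(2) in auto)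
  then show "L2v \<Omega> dphi" using pm(2) by (simp add: L2_def L2v_def)
qed

lemma test_fun_weak_grad:
  fixes \<Omega> :: "(real^'n::finite) set"
  assumes O: "open \<Omega>" "bounded \<Omega>" and t: "test_fun \<Omega> phi dphi"
  shows "is_weak_grad \<Omega> phi dphi" "H1 \<Omega> phi"
proof -
  have C1: "C1_grad phi dphi" by (rule test_funD(1)[OF t])
  have "(LINT x|lebesgue_on \<Omega>. phi x *\<^sub>R dpsi x) = - (LINT x|lebesgue_on \<Omega>. psi x *\<^sub>R dphi x)"
    if s: "test_fun \<Omega> psi dpsi" for psi dpsi
  proof -
    obtain B1 where B1: "\<And>x. norm (dphi x) \<le> B1" using test_fun_bounded[OF t] by blast
    obtain B2 where B2: "\<And>x. norm (dpsi x) \<le> B2" using test_fun_bounded[OF s] by blast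
    have i1: "integrable (lebesgue_on \<Omega>) (\<lambda>x. phi x *\<^sub>R dpsi x)"
      by (rule integrable_scaleR_bounded_right[OF L2_integrable[OF O test_fun_L2(1)[OF O t]]
            test_fun_measurable(2)[OF s O(1)] B2])
    have i2: "integrable (lebesgue_on \<Omega>) (\<lambda>x. psi x *\<^sub>R dphi x)"
      by (rule integrable_scaleR_bounded_right[OF L2_integrable[OF O test_fun_L2(1)[OF O s]]
            test_fun_measurable(2)[OF t O(1)] B1])
    show ?thesis
    proof (subst vec_eq_iff, intro allI)
      fix k
      have "(LINT x|lebesgue_on \<Omega>. phi x *\<^sub>R dpsi x) $ k = (LINT x|lebesgue_on \<Omega>. phi x * dpsi x $ k)"
        using integral_bounded_linear[OF bounded_linear_vec_nth i1, of k] by simp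
      also have "\<dots> = - (LINT x|lebesgue_on \<Omega>. psi x * dphi x $ k)"
        by (rule integration_by_parts_test_fun[OF O(1) _ _ s]) (use C1 continuous_on_subset in \<open>auto simp: C1_grad_def\<close>)
      also have "(LINT x|lebesgue_on \<Omega>. psi x * dphi x $ k) = (LINT x|lebesgue_on \<Omega>. psi x *\<^sub>R dphi x) $ k"
        using integral_bounded_linear[OF bounded_linear_vec_nth i2, of k] by simp
      finally show "(LINT x|lebesgue_on \<Omega>. phi x *\<^sub>R dpsi x) $ k = (- (LINT x|lebesgue_on \<Omega>. psi x *\<^sub>R dphi x)) $ k"
        by simp
    qed
  qed
  then show wg: "is_weak_grad \<Omega> phi dphi" using test_fun_L2(2)[OF O t] by (simp add: is_weak_grad_def)
  show "H1 \<Omega> phi" using wg test_fun_L2(1)[OF O t] by (auto simp: H1_def)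
qed

lemma weak_grad_AE_eq_gradient:
  fixes c :: "real^'n::finite \<Rightarrow> real"
  assumes O: "open \<Omega>" "bounded \<Omega>"
    and cder: "\<And>x. x \<in> \<Omega> \<Longrightarrow> (c has_derivative (\<lambda>h. Gc x \<bullet> h)) (at x)"
    and gcont: "continuous_on \<Omega> Gc" and wg: "is_weak_grad \<Omega> c g" and u: "L2 \<Omega> c"
  shows "AE x in lebesgue_on \<Omega>. g x = Gc x"
proof (rule AE_vec_eqI)
  fix k
  have "integrable (lebesgue_on \<Omega>) g" using wg L2v_integrable[OF O] by (auto simp: is_weak_grad_def)
  then have igk: "integrable (lebesgue_on \<Omega>) (\<lambda>x. g x $ k)"
    by (rule integrable_bounded_linear[OF bounded_linear_vec_nth])
  show "AE x in lebesgue_on \<Omega>. g x $ k = Gc x $ k"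
  proof (rule AE_eq_if_same_test_integrals[OF O(1) igk])
    show "locally_integrable \<Omega> (\<lambda>x. Gc x $ k)"
      by (rule locally_integrable_continuous[OF O(1) continuous_on_component[OF gcont]])
    fix phi dphi assume t: "test_fun \<Omega> phi dphi"
    have "(LINT x|lebesgue_on \<Omega>. c x * dphi x $ k) = - (LINT x|lebesgue_on \<Omega>. phi x * g x $ k)"
      by (rule is_weak_grad_component[OF O wg u t])
    moreover have "(LINT x|lebesgue_on \<Omega>. c x * dphi x $ k) = - (LINT x|lebesgue_on \<Omega>. phi x * Gc x $ k)"
      by (rule integration_by_parts_test_fun[OF O(1) cder gcont t])
    ultimately show "(LINT x|lebesgue_on \<Omega>. phi x * g x $ k) = (LINT x|lebesgue_on \<Omega>. phi x * Gc x $ k)"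
      by simp
  qed
qed

lemma wgrad_zero_AE:
  fixes \<Omega> :: "(real^'n::finite) set"
  assumes "open \<Omega>" "bounded \<Omega>"
  shows "AE x in lebesgue_on \<Omega>. wgrad \<Omega> (\<lambda>x. 0) x = 0"
  using weak_grad_AE_eq_gradient[OF assms _ _ is_weak_grad_wgrad[OF H1_zero], of "\<lambda>x. 0"]
  by (simp add: L2_def)

lemma test_fun_axis_weak_div:
  fixes \<Omega> :: "(real^'n::finite) set"
  assumes O: "open \<Omega>" "bounded \<Omega>" and t: "test_fun \<Omega> psi dpsi"
  shows "is_weak_div \<Omega> (\<lambda>x. psi x *\<^sub>R axis k 1) (\<lambda>x. dpsi x $ k)"
    "Hdiv \<Omega> (\<lambda>x. psi x *\<^sub>R axis k 1)"
proof -
  have C1: "C1_grad psi dpsi" by (rule test_funD(1)[OF t])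
  show wd: "is_weak_div \<Omega> (\<lambda>x. psi x *\<^sub>R axis k 1) (\<lambda>x. dpsi x $ k)"
    unfolding is_weak_div_def
  proof (intro conjI allI impI)
    show "L2 \<Omega> (\<lambda>x. dpsi x $ k)" by (rule test_fun_L2(3)[OF O t])
    fix phi dphi assume s: "test_fun \<Omega> phi dphi"
    have "(LINT x|lebesgue_on \<Omega>. (psi x *\<^sub>R axis k 1) \<bullet> dphi x) = (LINT x|lebesgue_on \<Omega>. psi x * dphi x $ k)"
      by (simp add: inner_axis')
    also have "\<dots> = - (LINT x|lebesgue_on \<Omega>. phi x * dpsi x $ k)"
      by (rule integration_by_parts_test_fun[OF O(1) _ _ s]) (use C1 continuous_on_subset in \<open>auto simp: C1_grad_def\<close>)
    finally show "(LINT x|lebesgue_on \<Omega>. (psi x *\<^sub>R axis k 1) \<bullet> dphi x) = - (LINT x|lebesgue_on \<Omega>. phi x * dpsi x $ k)" .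
  qed
  have "L2 \<Omega> psi" by (rule test_fun_L2(1)[OF O t])
  moreover have "(\<lambda>x. psi x *\<^sub>R axis k (1::real)) \<in> borel_measurable (lebesgue_on \<Omega>)"
    using test_fun_measurable(1)[OF t O(1)] by measurable
  ultimately have "L2v \<Omega> (\<lambda>x. psi x *\<^sub>R axis k 1)" by (simp add: L2v_def L2_def)
  then show "Hdiv \<Omega> (\<lambda>x. psi x *\<^sub>R axis k 1)" using wd by (auto simp: Hdiv_def)
qed

lemma wdiv_test_fun_axis_AE:
  fixes \<Omega> :: "(real^'n::finite) set"
  assumes O: "open \<Omega>" "bounded \<Omega>" and t: "test_fun \<Omega> psi dpsi"
  shows "AE x in lebesgue_on \<Omega>. wdiv \<Omega> (\<lambda>x. psi x *\<^sub>R axis k 1) x = dpsi x $ k"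
proof -
  define w where "w x = psi x *\<^sub>R axis k (1::real)" for x
  have wd: "is_weak_div \<Omega> w (\<lambda>x. dpsi x $ k)" and wH: "Hdiv \<Omega> w"
    using test_fun_axis_weak_div[OF O t] by (simp_all add: w_def[abs_def])
  have hw: "is_weak_div \<Omega> w (wdiv \<Omega> w)" by (rule is_weak_div_wdiv[OF wH])
  have "integrable (lebesgue_on \<Omega>) (wdiv \<Omega> w)" using hw L2_integrable[OF O] by (auto simp: is_weak_div_def)
  moreover have "locally_integrable \<Omega> (\<lambda>x. dpsi x $ k)"
    by (rule locally_integrable_integrable[OF O(1) L2_integrable[OF O test_fun_L2(3)[OF O t]]])
  moreover have "(LINT x|lebesgue_on \<Omega>. phi x * wdiv \<Omega> w x) = (LINT x|lebesgue_on \<Omega>. phi x * dpsi x $ k)"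
    if s: "test_fun \<Omega> phi dphi" for phi dphi
    using hw wd s by (auto simp: is_weak_div_def)
  ultimately have "AE x in lebesgue_on \<Omega>. wdiv \<Omega> w x = dpsi x $ k"
    by (rule AE_eq_if_same_test_integrals[OF O(1)])
  then show ?thesis by (simp add: w_def[abs_def])
qed

lemma integral_wdiv_test_fun_axis:
  fixes \<Omega> :: "(real^'n::finite) set"
  assumes O: "open \<Omega>" "bounded \<Omega>" and t: "test_fun \<Omega> psi dpsi" and u: "H1 \<Omega> u"
  shows "(LINT x|lebesgue_on \<Omega>. wdiv \<Omega> (\<lambda>x. psi x *\<^sub>R axis k 1) x * u x)
       = - (LINT x|lebesgue_on \<Omega>. psi x * wgrad \<Omega> u x $ k)"
proof -
  have uL2: "L2 \<Omega> u" using u by (simp add: H1_def)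
  have wm: "wdiv \<Omega> (\<lambda>x. psi x *\<^sub>R axis k 1) \<in> borel_measurable (lebesgue_on \<Omega>)"
    using is_weak_div_wdiv[OF test_fun_axis_weak_div(2)[OF O t]] by (simp add: is_weak_div_def L2_def)
  have um: "u \<in> borel_measurable (lebesgue_on \<Omega>)" using uL2 by (simp add: L2_def)
  have dm: "(\<lambda>x. dpsi x $ k) \<in> borel_measurable (lebesgue_on \<Omega>)"
    by (rule borel_measurable_vec_component[OF test_fun_measurable(2)[OF t O(1)]])
  have "(LINT x|lebesgue_on \<Omega>. wdiv \<Omega> (\<lambda>x. psi x *\<^sub>R axis k 1) x * u x)
      = (LINT x|lebesgue_on \<Omega>. u x * dpsi x $ k)"
  proof (rule integral_cong_AE)
    show "(\<lambda>x. wdiv \<Omega> (\<lambda>x. psi x *\<^sub>R axis k 1) x * u x) \<in> borel_measurable (lebesgue_on \<Omega>)"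
      using wm um by measurable
    show "(\<lambda>x. u x * dpsi x $ k) \<in> borel_measurable (lebesgue_on \<Omega>)" using um dm by measurable
    show "AE x in lebesgue_on \<Omega>. wdiv \<Omega> (\<lambda>x. psi x *\<^sub>R axis k 1) x * u x = u x * dpsi x $ k"
      using wdiv_test_fun_axis_AE[OF O t, of k] by eventually_elim simp
  qed
  also have "\<dots> = - (LINT x|lebesgue_on \<Omega>. psi x * wgrad \<Omega> u x $ k)"
    by (rule is_weak_grad_component[OF O is_weak_grad_wgrad[OF u] uL2 t])
  finally show ?thesis .
qed

lemma bdry_pair_test_fun_axis:
  fixes \<Omega> :: "(real^'n::finite) set"
  assumes O: "open \<Omega>" "bounded \<Omega>" and t: "test_fun \<Omega> psi dpsi" and Cp: "H1 \<Omega> Cp"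
  shows "bdry_pair \<Omega> (\<lambda>x. psi x *\<^sub>R axis k 1) Cp = 0"
  using integral_wdiv_test_fun_axis[OF O t Cp, of k] by (simp add: bdry_pair_def inner_axis')

section \<open>Matrix fields\<close>

lemma invertible_if_pos_def:
  fixes A :: "real^'n::finite^'n"
  assumes "\<And>u. u \<noteq> 0 \<Longrightarrow> u \<bullet> (A *v u) > 0"
  shows "invertible A"
proof -
  have "inj ((*v) A)"
  proof (rule injI)
    fix x y assume "A *v x = A *v y"
    then have "A *v (x - y) = 0" by (simp add: matrix_vector_mult_diff_distrib)
    then show "x = y" using assms[of "x - y"] by fastforce
  qed
  then show ?thesis by (simp add: invertible_left_inverse matrix_left_invertible_injective)
qed

lemma matrix_inv_invertible:
  fixes A :: "real^'n::finite^'n"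
  assumes "invertible A"
  shows "A ** matrix_inv A = mat 1" "matrix_inv A ** A = mat 1"
proof -
  have "\<exists>A'. A ** A' = mat 1 \<and> A' ** A = mat 1" using assms by (simp add: invertible_def)
  then have "A ** matrix_inv A = mat 1 \<and> matrix_inv A ** A = mat 1"
    unfolding matrix_inv_def by (rule someI_ex)
  then show "A ** matrix_inv A = mat 1" "matrix_inv A ** A = mat 1" by auto
qed

lemma matrix_inv_vector_mult:
  fixes A :: "real^'n::finite^'n"
  assumes "invertible A"
  shows "A *v (matrix_inv A *v y) = y" "matrix_inv A *v (A *v y) = y"
  using matrix_inv_invertible[OF assms] by (simp_all add: matrix_vector_mul_assoc)

lemma symmetric_matrix_inv:
  fixes A :: "real^'n::finite^'n"
  assumes "invertible A" "transpose A = A"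
  shows "transpose (matrix_inv A) = matrix_inv A"
proof -
  note inv = matrix_inv_invertible[OF assms(1)]
  have left: "transpose (matrix_inv A) ** A = mat 1"
    using inv(1) assms(2) by (metis matrix_transpose_mul transpose_mat)
  have "transpose (matrix_inv A) = transpose (matrix_inv A) ** (A ** matrix_inv A)"
    using inv(1) by simp
  also have "\<dots> = matrix_inv A" using left by (simp add: matrix_mul_assoc)
  finally show ?thesis .
qed

lemma inner_symmetric_matrix_vector_mult:
  fixes B :: "real^'n::finite^'n"
  assumes "transpose B = B"
  shows "(B *v w) \<bullet> z = w \<bullet> (B *v z)"
proof -
  have "B *v w = w v* B" using vector_transpose_matrix[of w B] assms by simp
  then show ?thesis by (simp add: dot_lmul_matrix)
qed

lemma inner_matrix_inv_symmetric:
  fixes A :: "real^'n::finite^'n"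
  assumes "invertible A" "transpose A = A"
  shows "(matrix_inv A *v w) \<bullet> (A *v y) = w \<bullet> y"
  using inner_symmetric_matrix_vector_mult[OF symmetric_matrix_inv[OF assms]]
  by (simp add: matrix_inv_vector_mult(2)[OF assms(1)])

lemma matrix_vector_mult_eq_sum_columns:
  fixes B :: "real^'n::finite^'m::finite"
  shows "B *v y = (\<Sum>j\<in>UNIV. y $ j *\<^sub>R (B *v axis j 1))"
  by (simp add: vec_eq_iff matrix_vector_mult_def sum_component axis_def mult.commute
      if_distrib cong: if_cong)

lemma continuous_on_matrix_vector_mult:
  fixes A :: "'a::topological_space \<Rightarrow> real^'n::finite^'m::finite"
  assumes "continuous_on S A" "continuous_on S y"
  shows "continuous_on S (\<lambda>x. A x *v y x)"
  unfolding matrix_vector_mult_def using assms by (intro continuous_intros)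

lemma continuous_on_det:
  fixes A :: "'a::topological_space \<Rightarrow> real^'n::finite^'n"
  assumes "\<And>i j. continuous_on S (\<lambda>x. A x $ i $ j)"
  shows "continuous_on S (\<lambda>x. det (A x))"
  unfolding det_def using assms
  by (intro continuous_on_sum continuous_on_mult continuous_on_prod continuous_on_const) auto

text \<open>Continuity of the inverse comes from Cramer's rule.\<close>
lemma continuous_on_matrix_inv:
  fixes A :: "'a::topological_space \<Rightarrow> real^'n::finite^'n"
  assumes c: "continuous_on S A" and inv: "\<And>x. x \<in> S \<Longrightarrow> invertible (A x)"
  shows "continuous_on S (\<lambda>x. matrix_inv (A x))"
proof -
  have ent: "continuous_on S (\<lambda>x. A x $ i $ j)" for i j
    using c by (intro continuous_on_component)
  have d0: "det (A x) \<noteq> 0" if "x \<in> S" for x using inv[OF that] invertible_det_nz by blast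
  have col: "continuous_on S (\<lambda>x. matrix_inv (A x) *v b)" for b
  proof -
    have eq: "matrix_inv (A x) *v b = (\<chi> k. det (\<chi> i j. if j = k then b$i else A x$i$j) / det (A x))"
      if "x \<in> S" for x
      using cramer[OF d0[OF that], of "matrix_inv (A x) *v b" b]
        matrix_inv_vector_mult(1)[OF inv[OF that]] by simp
    have "continuous_on S (\<lambda>x. \<chi> k. det (\<chi> i j. if j = k then b$i else A x$i$j) / det (A x))"
    proof (intro continuous_on_vec_lambda continuous_on_divide continuous_on_det)
      fix k i j
      show "continuous_on S (\<lambda>x. (\<chi> i j. if j = k then b$i else A x$i$j) $ i $ j)"
        using ent by (cases "j = k") (simp_all add: continuous_on_const)
    qed (use ent d0 in auto)
    then show ?thesis by (subst continuous_on_cong[OF refl eq]) auto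
  qed
  have "continuous_on S (\<lambda>x. \<chi> i j. (matrix_inv (A x) *v axis j 1) $ i)"
    using col by (intro continuous_on_vec_lambda continuous_on_component)
  moreover have "(\<chi> i j. (matrix_inv (A x) *v axis j 1) $ i) = matrix_inv (A x)" for x
    by (simp add: vec_eq_iff matrix_vector_mult_basis column_def)
  ultimately show ?thesis by simp
qed

lemma measurable_matrix_vector_mult:
  fixes A :: "real^'n::finite \<Rightarrow> real^'n^'n"
  assumes O: "open \<Omega>" and A: "continuous_on \<Omega> A" and y: "y \<in> borel_measurable (lebesgue_on \<Omega>)"
  shows "(\<lambda>x. A x *v y x) \<in> borel_measurable (lebesgue_on \<Omega>)"
proof -
  have "(\<lambda>x. A x *v axis j 1) \<in> borel_measurable (lebesgue_on \<Omega>)" for j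
    using continuous_on_matrix_vector_mult[OF A continuous_on_const] by (rule measurable_lebesgue_on_continuous[OF O])
  moreover have "(\<lambda>x. y x $ j) \<in> borel_measurable (lebesgue_on \<Omega>)" for j
    by (rule borel_measurable_vec_component[OF y])
  ultimately have "(\<lambda>x. \<Sum>j\<in>UNIV. y x $ j *\<^sub>R (A x *v axis j 1)) \<in> borel_measurable (lebesgue_on \<Omega>)"
    by (intro borel_measurable_sum borel_measurable_scaleR) auto
  then show ?thesis by (subst matrix_vector_mult_eq_sum_columns) simp
qed

lemma matrix_vector_mult_bounded_on_compact:
  fixes A :: "real^'n::finite \<Rightarrow> real^'n^'n"
  assumes S: "compact S" and A: "continuous_on S A"
  shows "\<exists>C. \<forall>x\<in>S. \<forall>y. norm (A x *v y) \<le> C * norm y"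
proof -
  have "\<forall>j. \<exists>Cj. \<forall>x\<in>S. norm (A x *v axis j 1) \<le> Cj"
  proof
    fix j
    have "compact ((\<lambda>x. A x *v axis j 1) ` S)"
      by (rule compact_continuous_image[OF continuous_on_matrix_vector_mult[OF A continuous_on_const] S])
    then have "bounded ((\<lambda>x. A x *v axis j 1) ` S)" by (rule compact_imp_bounded)
    then show "\<exists>Cj. \<forall>x\<in>S. norm (A x *v axis j 1) \<le> Cj" unfolding bounded_iff by auto
  qed
  then obtain Cj where Cj: "\<And>j x. x \<in> S \<Longrightarrow> norm (A x *v axis j 1) \<le> Cj j" by metis
  have "norm (A x *v y) \<le> (\<Sum>j\<in>UNIV. \<bar>Cj j\<bar>) * norm y" if x: "x \<in> S" for x y
  proof -
    have "norm (A x *v y) \<le> (\<Sum>j\<in>UNIV. norm (y $ j *\<^sub>R (A x *v axis j 1)))"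
      by (subst matrix_vector_mult_eq_sum_columns) (rule norm_sum)
    also have "\<dots> \<le> (\<Sum>j\<in>UNIV. norm y * \<bar>Cj j\<bar>)"
    proof (rule sum_mono)
      fix j
      show "norm (y $ j *\<^sub>R (A x *v axis j 1)) \<le> norm y * \<bar>Cj j\<bar>"
        using Cj[OF x, of j] component_le_norm_cart[of y j] by (auto intro: mult_mono)
    qed
    also have "\<dots> = (\<Sum>j\<in>UNIV. \<bar>Cj j\<bar>) * norm y" by (simp add: sum_distrib_left mult.commute)
    finally show ?thesis .
  qed
  then show ?thesis by blast
qed

section \<open>The stabilised mixed formulation\<close>

definition vms_form :: "(real^'n::finite) set \<Rightarrow> (real^'n \<Rightarrow> real^'n^'n) \<Rightarrow> (real^'n \<Rightarrow> real) \<Rightarrow>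
    (real^'n \<Rightarrow> real) \<Rightarrow> (real^'n \<Rightarrow> real) \<Rightarrow> (real^'n \<Rightarrow> real^'n) \<Rightarrow>
    (real^'n \<Rightarrow> real) \<Rightarrow> (real^'n \<Rightarrow> real^'n) \<Rightarrow> real" where
  "vms_form \<Omega> D Cp f c v q w =
      (LINT x|lebesgue_on \<Omega>. w x \<bullet> (matrix_inv (D x) *v v x))
    - (LINT x|lebesgue_on \<Omega>. wdiv \<Omega> w x * c x)
    + bdry_pair \<Omega> w Cp
    - (LINT x|lebesgue_on \<Omega>. q x * (wdiv \<Omega> v x - f x))
    - (1/2) * (LINT x|lebesgue_on \<Omega>.
          (matrix_inv (D x) *v w x + wgrad \<Omega> q x) \<bullet> (D x *v (matrix_inv (D x) *v v x + wgrad \<Omega> c x)))"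

locale vms_solution =
  fixes \<Omega> :: "(real^'n::finite) set" and D :: "real^'n \<Rightarrow> real^'n^'n"
    and Cp f c :: "real^'n \<Rightarrow> real" and v :: "real^'n \<Rightarrow> real^'n"
  assumes open_domain: "open \<Omega>" and bounded_domain: "bounded \<Omega>"
    and D_invertible: "\<And>x. x \<in> closure \<Omega> \<Longrightarrow> invertible (D x)"
    and D_symmetric: "\<And>x. x \<in> closure \<Omega> \<Longrightarrow> transpose (D x) = D x"
    and D_continuous: "continuous_on (closure \<Omega>) D"
    and Cp_H1: "H1 \<Omega> Cp" and c_H1: "H1 \<Omega> c" and v_Hdiv: "Hdiv \<Omega> v" and f_L2: "L2 \<Omega> f"
    and vms_form_eq_0: "\<And>q w. H1 \<Omega> q \<Longrightarrow> Hdiv \<Omega> w \<Longrightarrow> vms_form \<Omega> D Cp f c v q w = 0"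
begin

lemmas open_bounded_domain = open_domain bounded_domain

lemma continuous_on_D: "continuous_on \<Omega> D"
  using D_continuous closure_subset continuous_on_subset by blast

lemma continuous_on_D_inv: "continuous_on \<Omega> (\<lambda>x. matrix_inv (D x))"
  using continuous_on_matrix_inv[OF D_continuous D_invertible] closure_subset continuous_on_subset
  by blast

lemma integrable_D_inv_v: "integrable (lebesgue_on \<Omega>) (\<lambda>x. matrix_inv (D x) *v v x)"
proof -
  obtain C where C: "\<And>x y. x \<in> closure \<Omega> \<Longrightarrow> norm (matrix_inv (D x) *v y) \<le> C * norm y"
    using matrix_vector_mult_bounded_on_compact[OF _ continuous_on_matrix_inv[OF D_continuous D_invertible]]
      bounded_domain by (metis compact_closure)
  then have C': "\<And>x y. x \<in> \<Omega> \<Longrightarrow> norm (matrix_inv (D x) *v y) \<le> C * norm y"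
    using closure_subset by blast
  have vi: "integrable (lebesgue_on \<Omega>) v"
    using v_Hdiv L2v_integrable[OF open_bounded_domain] by (simp add: Hdiv_def)
  show ?thesis
  proof (rule Bochner_Integration.integrable_bound[of _ "\<lambda>x. C * norm (v x)"])
    show "integrable (lebesgue_on \<Omega>) (\<lambda>x. C * norm (v x))" using vi by auto
    show "(\<lambda>x. matrix_inv (D x) *v v x) \<in> borel_measurable (lebesgue_on \<Omega>)"
      using measurable_matrix_vector_mult[OF open_domain continuous_on_D_inv] vi
      by (simp add: borel_measurable_integrable)
    show "AE x in lebesgue_on \<Omega>. norm (matrix_inv (D x) *v v x) \<le> norm (C * norm (v x))"
      using AE_lebesgue_on_mem[of \<Omega>] by eventually_elim
        (use C' in \<open>auto intro: order_trans[OF _ abs_ge_self]\<close>)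
  qed
qed

definition constitutive_residual :: "real^'n \<Rightarrow> real^'n" where
  "constitutive_residual x = matrix_inv (D x) *v v x + wgrad \<Omega> c x"

lemma integrable_constitutive_residual: "integrable (lebesgue_on \<Omega>) constitutive_residual"
  using integrable_D_inv_v is_weak_grad_wgrad[OF c_H1] L2v_integrable[OF open_bounded_domain]
  unfolding constitutive_residual_def[abs_def] by (simp add: is_weak_grad_def)

text \<open>The stabilisation term reduces to \<open>-(1/2) (\<psi>; r\<^sub>k)\<close> because \<open>\<nabla>0 = 0\<close> and
  \<open>(D\<^sup>-\<^sup>1w) \<cdot> (D r) = w \<cdot> r\<close> for symmetric \<open>D\<close>.\<close>
lemma vms_form_test_fun_axis:
  assumes t: "test_fun \<Omega> psi dpsi"
  shows "vms_form \<Omega> D Cp f c v (\<lambda>x. 0) (\<lambda>x. psi x *\<^sub>R axis k 1)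
       = (1/2) * (LINT x|lebesgue_on \<Omega>. psi x * constitutive_residual x $ k)"
proof -
  define M where "M = lebesgue_on \<Omega>"
  define w where "w x = psi x *\<^sub>R axis k (1::real)" for x
  define gc where "gc = wgrad \<Omega> c"
  obtain B where B: "\<And>x. \<bar>psi x\<bar> \<le> B" using test_fun_bounded[OF t] by blast
  note psim = test_fun_measurable[OF t open_domain]
  have gci: "integrable M gc"
    using is_weak_grad_wgrad[OF c_H1] L2v_integrable[OF open_bounded_domain] by (simp add: is_weak_grad_def M_def gc_def)
  have i1: "integrable M (\<lambda>x. psi x * (matrix_inv (D x) *v v x) $ k)"
    using integrable_scaleR_bounded_left[OF integrable_bounded_linear[OF bounded_linear_vec_nth
        integrable_D_inv_v] psim(1) B] by (simp add: M_def)
  have i2: "integrable M (\<lambda>x. psi x * gc x $ k)"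
    using integrable_scaleR_bounded_left[OF integrable_bounded_linear[OF bounded_linear_vec_nth gci]
        psim(1)[folded M_def] B] by simp
  have stab: "(LINT x|M. (matrix_inv (D x) *v w x + wgrad \<Omega> (\<lambda>x. 0) x) \<bullet> (D x *v constitutive_residual x))
      = (LINT x|M. psi x * constitutive_residual x $ k)"
  proof (rule integral_cong_AE)
    have "w \<in> borel_measurable M" unfolding w_def M_def using psim(1) by measurable
    then show "(\<lambda>x. (matrix_inv (D x) *v w x + wgrad \<Omega> (\<lambda>x. 0) x) \<bullet> (D x *v constitutive_residual x))
        \<in> borel_measurable M"
      using measurable_matrix_vector_mult[OF open_domain continuous_on_D_inv]
        measurable_matrix_vector_mult[OF open_domain continuous_on_D
          borel_measurable_integrable[OF integrable_constitutive_residual]]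
        is_weak_grad_wgrad[OF H1_zero, of \<Omega>]
      unfolding M_def by (auto simp: is_weak_grad_def L2v_def)
    show "(\<lambda>x. psi x * constitutive_residual x $ k) \<in> borel_measurable M"
      using psim(1) borel_measurable_vec_component[OF borel_measurable_integrable[OF integrable_constitutive_residual]]
      unfolding M_def by measurable
    show "AE x in M. (matrix_inv (D x) *v w x + wgrad \<Omega> (\<lambda>x. 0) x) \<bullet> (D x *v constitutive_residual x)
        = psi x * constitutive_residual x $ k"
      using wgrad_zero_AE[OF open_bounded_domain] AE_lebesgue_on_mem[of \<Omega>] unfolding M_def
    proof eventually_elim
      case (elim x)
      then have "x \<in> closure \<Omega>" using closure_subset by blast
      then have "(matrix_inv (D x) *v w x) \<bullet> (D x *v constitutive_residual x) = w x \<bullet> constitutive_residual x"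
        by (intro inner_matrix_inv_symmetric D_invertible D_symmetric)
      then show ?case using elim by (simp add: w_def inner_axis')
    qed
  qed
  have "vms_form \<Omega> D Cp f c v (\<lambda>x. 0) w
      = (LINT x|M. psi x * (matrix_inv (D x) *v v x) $ k) + (LINT x|M. psi x * gc x $ k)
        - (1/2) * (LINT x|M. psi x * constitutive_residual x $ k)"
    using integral_wdiv_test_fun_axis[OF open_bounded_domain t c_H1, of k] bdry_pair_test_fun_axis[OF open_bounded_domain t Cp_H1, of k] stab
    by (simp add: vms_form_def w_def[abs_def] M_def gc_def constitutive_residual_def inner_axis')
  also have "(LINT x|M. psi x * (matrix_inv (D x) *v v x) $ k) + (LINT x|M. psi x * gc x $ k)
      = (LINT x|M. psi x * constitutive_residual x $ k)"
    using Bochner_Integration.integral_add[OF i1 i2]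
    by (simp add: constitutive_residual_def gc_def algebra_simps)
  finally show ?thesis by (simp add: w_def[abs_def] M_def)
qed

lemma constitutive_residual_AE_zero: "AE x in lebesgue_on \<Omega>. constitutive_residual x = 0"
proof (rule AE_vec_eqI)
  fix k
  have "AE x in lebesgue_on \<Omega>. constitutive_residual x $ k = 0"
  proof (rule AE_eq_if_same_test_integrals[OF open_domain])
    show "integrable (lebesgue_on \<Omega>) (\<lambda>x. constitutive_residual x $ k)"
      by (rule integrable_bounded_linear[OF bounded_linear_vec_nth integrable_constitutive_residual])
    show "locally_integrable \<Omega> (\<lambda>x. 0)"
      by (rule locally_integrable_continuous[OF open_domain continuous_on_const])
    fix psi dpsi assume t: "test_fun \<Omega> psi dpsi"
    have "vms_form \<Omega> D Cp f c v (\<lambda>x. 0) (\<lambda>x. psi x *\<^sub>R axis k 1) = 0"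
      by (rule vms_form_eq_0[OF H1_zero test_fun_axis_weak_div(2)[OF open_bounded_domain t]])
    then show "(LINT x|lebesgue_on \<Omega>. psi x * constitutive_residual x $ k) = (LINT x|lebesgue_on \<Omega>. psi x * 0)"
      using vms_form_test_fun_axis[OF t] by simp
  qed
  then show "AE x in lebesgue_on \<Omega>. constitutive_residual x $ k = 0 $ k" by simp
qed

text \<open>Once the residual vanishes, \<open>q\<close> only enters through \<open>(q; \<nabla>\<cdot>v - f)\<close>. The instance
  \<open>q = 0\<close> is subtracted so that the \<open>w\<close>-terms at \<open>w = 0\<close>, which involve the chosen
  representative \<open>wdiv \<Omega> (\<lambda>x. 0)\<close>, never have to be evaluated.\<close>
lemma weak_div_v_eq_f:
  assumes t: "test_fun \<Omega> phi dphi"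
  shows "(LINT x|lebesgue_on \<Omega>. v x \<bullet> dphi x) = - (LINT x|lebesgue_on \<Omega>. phi x * f x)"
proof -
  define M where "M = lebesgue_on \<Omega>"
  have R0: "(LINT x|M. wgrad \<Omega> q x \<bullet> (D x *v constitutive_residual x)) = 0" for q
    unfolding M_def by (rule integral_eq_zero_AE) (use constitutive_residual_AE_zero in \<open>eventually_elim, simp\<close>)
  have "vms_form \<Omega> D Cp f c v phi (\<lambda>x. 0) - vms_form \<Omega> D Cp f c v (\<lambda>x. 0) (\<lambda>x. 0) = 0"
    using vms_form_eq_0[OF test_fun_weak_grad(2)[OF open_bounded_domain t] Hdiv_zero]
      vms_form_eq_0[OF H1_zero Hdiv_zero] by simp
  then have Q: "(LINT x|M. phi x * (wdiv \<Omega> v x - f x)) = 0"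
    using R0 by (simp add: vms_form_def constitutive_residual_def M_def)
  have hv: "is_weak_div \<Omega> v (wdiv \<Omega> v)" by (rule is_weak_div_wdiv[OF v_Hdiv])
  have hvi: "integrable M (wdiv \<Omega> v)" using hv L2_integrable[OF open_bounded_domain] by (auto simp: is_weak_div_def M_def)
  have fi: "integrable M f" using L2_integrable[OF open_bounded_domain f_L2] by (simp add: M_def)
  obtain B where B: "\<And>x. \<bar>phi x\<bar> \<le> B" using test_fun_bounded[OF t] by blast
  have pm: "phi \<in> borel_measurable M" using test_fun_measurable[OF t open_domain] by (simp add: M_def)
  have "(LINT x|M. phi x * wdiv \<Omega> v x) = (LINT x|M. phi x * f x)"
    using Q Bochner_Integration.integral_diff[OF integrable_scaleR_bounded_left[OF hvi pm B]
        integrable_scaleR_bounded_left[OF fi pm B]]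
    by (simp add: right_diff_distrib)
  moreover have "(LINT x|M. v x \<bullet> dphi x) = - (LINT x|M. phi x * wdiv \<Omega> v x)"
    using hv t by (auto simp: is_weak_div_def M_def)
  ultimately show ?thesis by (simp add: M_def)
qed

end

section \<open>The weak minimum principle\<close>

definition weak_supersolution :: "(real^'n::finite) set \<Rightarrow> (real^'n \<Rightarrow> real^'n^'n) \<Rightarrow> (real^'n \<Rightarrow> real^'n) \<Rightarrow> bool" where
  "weak_supersolution \<Omega> D Gc \<longleftrightarrow> (\<forall>phi dphi. test_fun \<Omega> phi dphi \<longrightarrow> (\<forall>x. 0 \<le> phi x) \<longrightarrow>
     0 \<le> (LINT x|lebesgue_on \<Omega>. (D x *v Gc x) \<bullet> dphi x))"

lemma (in vms_solution) weak_supersolution: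
  assumes cder: "\<And>x. x \<in> \<Omega> \<Longrightarrow> (c has_derivative (\<lambda>h. Gc x \<bullet> h)) (at x)"
    and gcont: "continuous_on \<Omega> Gc"
    and f_nonneg: "AE x in lebesgue_on \<Omega>. f x \<ge> 0"
  shows "weak_supersolution \<Omega> D Gc"
  unfolding weak_supersolution_def
proof (intro allI impI)
  fix phi dphi assume t: "test_fun \<Omega> phi dphi" and nn: "\<forall>x. 0 \<le> phi x"
  have "AE x in lebesgue_on \<Omega>. wgrad \<Omega> c x = Gc x"
    using c_H1 by (intro weak_grad_AE_eq_gradient[OF open_bounded_domain cder gcont is_weak_grad_wgrad]) (simp_all add: H1_def)
  then have flux: "AE x in lebesgue_on \<Omega>. v x = - (D x *v Gc x)"
    using constitutive_residual_AE_zero AE_lebesgue_on_mem[of \<Omega>]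
  proof eventually_elim
    case (elim x)
    then have x: "x \<in> closure \<Omega>" using closure_subset by blast
    from elim have "matrix_inv (D x) *v v x = - Gc x"
      by (simp add: constitutive_residual_def eq_neg_iff_add_eq_0)
    then have "v x = D x *v (- Gc x)"
      using matrix_inv_vector_mult(1)[OF D_invertible[OF x]] by metis
    then show ?case by (simp add: vec_eq_iff matrix_vector_mult_def sum_negf)
  qed
  have vm: "v \<in> borel_measurable (lebesgue_on \<Omega>)" using v_Hdiv by (simp add: Hdiv_def L2v_def)
  have "(LINT x|lebesgue_on \<Omega>. (D x *v Gc x) \<bullet> dphi x) = (LINT x|lebesgue_on \<Omega>. - (v x \<bullet> dphi x))"
  proof (rule integral_cong_AE)
    show "(\<lambda>x. (D x *v Gc x) \<bullet> dphi x) \<in> borel_measurable (lebesgue_on \<Omega>)"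
      using measurable_matrix_vector_mult[OF open_domain continuous_on_D
          measurable_lebesgue_on_continuous[OF open_domain gcont]]
        test_fun_measurable(2)[OF t open_domain] by measurable
    show "(\<lambda>x. - (v x \<bullet> dphi x)) \<in> borel_measurable (lebesgue_on \<Omega>)"
      using vm test_fun_measurable(2)[OF t open_domain] by measurable
    show "AE x in lebesgue_on \<Omega>. (D x *v Gc x) \<bullet> dphi x = - (v x \<bullet> dphi x)"
      using flux by eventually_elim simp
  qed
  also have "\<dots> = (LINT x|lebesgue_on \<Omega>. phi x * f x)" using weak_div_v_eq_f[OF t] by simp
  also have "\<dots> \<ge> 0" by (rule integral_nonneg_AE) (use f_nonneg nn in \<open>auto elim: AE_mp\<close>)
  finally show "0 \<le> (LINT x|lebesgue_on \<Omega>. (D x *v Gc x) \<bullet> dphi x)" .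
qed

lemma AE_zero_continuous_imp_zero:
  fixes g :: "real^'n::finite \<Rightarrow> real"
  assumes O: "open \<Omega>" and g: "continuous_on \<Omega> g" and ae: "AE x in lebesgue_on \<Omega>. g x = 0"
    and x0: "x0 \<in> \<Omega>"
  shows "g x0 = 0"
proof (rule ccontr)
  assume ne: "g x0 \<noteq> 0"
  define V where "V = \<Omega> \<inter> g -` (- {0})"
  have Vo: "open V" unfolding V_def by (rule continuous_open_preimage[OF g O]) auto
  have Vne: "V \<noteq> {}" using x0 ne by (auto simp: V_def)
  have "AE x in lebesgue. x \<in> \<Omega> \<longrightarrow> g x = 0" using ae O by (subst (asm) AE_restrict_space_iff) auto
  then obtain N where N: "{x \<in> space lebesgue. \<not> (x \<in> \<Omega> \<longrightarrow> g x = 0)} \<subseteq> N"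
    "emeasure lebesgue N = 0" "N \<in> sets lebesgue"
    by (rule AE_E)
  have "negligible N" using N by (simp add: negligible_iff_null_sets null_sets_def)
  moreover have "V \<subseteq> N" using N(1) by (auto simp: V_def)
  ultimately have "negligible V" using negligible_subset by blast
  then show False using open_not_negligible[OF Vo Vne] by blast
qed

lemma continuous_nonneg_integral_le_0_imp_zero:
  fixes G :: "real^'n::finite \<Rightarrow> real"
  assumes O: "open \<Omega>" and G: "continuous_on \<Omega> G" "integrable (lebesgue_on \<Omega>) G"
    and nn: "\<And>x. x \<in> \<Omega> \<Longrightarrow> 0 \<le> G x" and le: "(LINT x|lebesgue_on \<Omega>. G x) \<le> 0"
    and x: "x \<in> \<Omega>"
  shows "G x = 0"
proof -
  have ae_nn: "AE x in lebesgue_on \<Omega>. 0 \<le> G x"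
    using AE_lebesgue_on_mem[of \<Omega>] by eventually_elim (rule nn)
  then have "(LINT x|lebesgue_on \<Omega>. G x) = 0" using le integral_nonneg_AE[OF ae_nn] by linarith
  then have "AE x in lebesgue_on \<Omega>. G x = 0" using integral_nonneg_eq_0_iff_AE[OF G(2) ae_nn] by simp
  then show ?thesis by (rule AE_zero_continuous_imp_zero[OF O G(1) _ x])
qed

lemma test_fun_pos_part_sq_sublevel:
  fixes c :: "real^'n::finite \<Rightarrow> real"
  assumes O: "open \<Omega>"
    and cder: "\<And>x. x \<in> \<Omega> \<Longrightarrow> (c has_derivative (\<lambda>h. Gc x \<bullet> h)) (at x)"
    and gcont: "continuous_on \<Omega> Gc"
    and K: "compact K" "K \<subseteq> \<Omega>" and sublevel: "\<And>x. x \<in> \<Omega> \<Longrightarrow> c x \<le> \<kappa> \<Longrightarrow> x \<in> K"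
  shows "test_fun \<Omega> (\<lambda>x. if x \<in> \<Omega> then (max 0 (\<kappa> - c x))^2 else 0)
                    (\<lambda>x. if x \<in> \<Omega> then (- (2 * max 0 (\<kappa> - c x))) *\<^sub>R Gc x else 0)"
proof -
  have zero: "(if x \<in> \<Omega> then (max 0 (\<kappa> - c x))^2 else 0) = 0" if "x \<notin> K" for x
  proof (cases "x \<in> \<Omega>")
    case True
    then have "\<kappa> < c x" using sublevel[OF True] that not_le by blast
    then show ?thesis by (simp add: max_def)
  qed simp
  have "C1_grad (\<lambda>x. if x \<in> \<Omega> then (max 0 (\<kappa> - c x))^2 else 0)
      (\<lambda>x. if x \<in> \<Omega> then (- (2 * max 0 (\<kappa> - c x))) *\<^sub>R Gc x else 0)"
  proof (rule C1_grad_of_compact_support_in_open[OF O K])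
    fix x assume x: "x \<in> \<Omega>"
    have outer: "((\<lambda>t. (max 0 t)^2) has_derivative (*) (2 * max 0 (\<kappa> - c x))) (at (\<kappa> - c x))"
      using has_real_derivative_pos_part_sq[of "\<kappa> - c x"] by (simp add: has_field_derivative_def)
    have inner: "((\<lambda>y. \<kappa> - c y) has_derivative (\<lambda>h. - (Gc x \<bullet> h))) (at x)"
      using cder[OF x] by (auto intro!: derivative_eq_intros)
    have "((\<lambda>y. (max 0 (\<kappa> - c y))^2) has_derivative (\<lambda>h. 2 * max 0 (\<kappa> - c x) * - (Gc x \<bullet> h))) (at x)"
      using has_derivative_compose[OF inner outer] by simp
    moreover have "(\<lambda>h. 2 * max 0 (\<kappa> - c x) * - (Gc x \<bullet> h)) = (\<lambda>h. ((- (2 * max 0 (\<kappa> - c x))) *\<^sub>R Gc x) \<bullet> h)"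
      by (auto simp: fun_eq_iff)
    ultimately have "((\<lambda>y. (max 0 (\<kappa> - c y))^2) has_derivative
        (\<lambda>h. ((- (2 * max 0 (\<kappa> - c x))) *\<^sub>R Gc x) \<bullet> h)) (at x)" by simp
    then show "((\<lambda>x. if x \<in> \<Omega> then (max 0 (\<kappa> - c x))^2 else 0) has_derivative
        (\<lambda>h. ((- (2 * max 0 (\<kappa> - c x))) *\<^sub>R Gc x) \<bullet> h)) (at x)"
      by (rule has_derivative_transform_within_open[OF _ O x]) simp
  next
    have "continuous_on \<Omega> c"
      by (rule continuous_at_imp_continuous_on) (use cder has_derivative_continuous in blast)
    then show "continuous_on \<Omega> (\<lambda>x. (- (2 * max 0 (\<kappa> - c x))) *\<^sub>R Gc x)"
      using gcont by (intro continuous_intros)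
  qed (rule zero)
  then show ?thesis by (rule test_funI[OF _ K zero])
qed

text \<open>Testing the supersolution inequality with \<open>(\<kappa> - c)\<^sub>+\<^sup>2\<close> gives
  \<open>\<integral> 2 (\<kappa> - c)\<^sub>+ (D \<nabla>c \<cdot> \<nabla>c) \<le> 0\<close>, an integral of a continuous nonnegative function.\<close>
lemma weak_supersolution_grad_zero_below_level:
  fixes c :: "real^'n::finite \<Rightarrow> real"
  assumes O: "open \<Omega>"
    and cder: "\<And>x. x \<in> \<Omega> \<Longrightarrow> (c has_derivative (\<lambda>h. Gc x \<bullet> h)) (at x)"
    and gcont: "continuous_on \<Omega> Gc"
    and Dpos: "\<And>x u. x \<in> \<Omega> \<Longrightarrow> u \<noteq> 0 \<Longrightarrow> u \<bullet> (D x *v u) > 0"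
    and Dc: "continuous_on \<Omega> D"
    and super: "weak_supersolution \<Omega> D Gc"
    and K: "compact K" "K \<subseteq> \<Omega>" and sublevel: "\<And>x. x \<in> \<Omega> \<Longrightarrow> c x \<le> \<kappa> \<Longrightarrow> x \<in> K"
    and x: "x \<in> \<Omega>" "c x < \<kappa>"
  shows "Gc x = 0"
proof (rule ccontr)
  define phi where "phi x = (if x \<in> \<Omega> then (max 0 (\<kappa> - c x))^2 else 0)" for x
  define dphi where "dphi x = (if x \<in> \<Omega> then (- (2 * max 0 (\<kappa> - c x))) *\<^sub>R Gc x else 0)" for x
  define G where "G x = 2 * max 0 (\<kappa> - c x) * ((D x *v Gc x) \<bullet> Gc x)" for x
  have t: "test_fun \<Omega> phi dphi"
    unfolding phi_def[abs_def] dphi_def[abs_def] by (rule test_fun_pos_part_sq_sublevel[OF O cder gcont K sublevel])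
  have DGc: "continuous_on \<Omega> (\<lambda>x. D x *v Gc x)" by (rule continuous_on_matrix_vector_mult[OF Dc gcont])
  have ccont: "continuous_on \<Omega> c"
    by (rule continuous_at_imp_continuous_on) (use cder has_derivative_continuous in blast)
  have Gcont: "continuous_on \<Omega> G" unfolding G_def using ccont DGc gcont by (intro continuous_intros)
  have Gnn: "0 \<le> G y" if "y \<in> \<Omega>" for y
    using Dpos[OF that, of "Gc y"] by (cases "Gc y = 0") (auto simp: G_def inner_commute)
  have Gint: "integrable (lebesgue_on \<Omega>) G"
    using integrable_lebesgue_on_compact_support(1)[OF _ K continuous_on_subset[OF Gcont K(2)]] O sublevel
    by (force simp: G_def)
  have "(LINT y|lebesgue_on \<Omega>. (D y *v Gc y) \<bullet> dphi y) = (LINT y|lebesgue_on \<Omega>. - G y)"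
  proof (rule integral_cong_AE)
    show "(\<lambda>y. (D y *v Gc y) \<bullet> dphi y) \<in> borel_measurable (lebesgue_on \<Omega>)"
      using measurable_lebesgue_on_continuous[OF O DGc] test_fun_measurable(2)[OF t O] by measurable
    show "(\<lambda>y. - G y) \<in> borel_measurable (lebesgue_on \<Omega>)"
      using measurable_lebesgue_on_continuous[OF O Gcont] by measurable
    show "AE y in lebesgue_on \<Omega>. (D y *v Gc y) \<bullet> dphi y = - G y"
      using AE_lebesgue_on_mem[of \<Omega>] by eventually_elim (simp add: dphi_def G_def)
  qed
  moreover have "0 \<le> (LINT y|lebesgue_on \<Omega>. (D y *v Gc y) \<bullet> dphi y)"
    using super t by (auto simp: weak_supersolution_def phi_def)
  ultimately have "(LINT y|lebesgue_on \<Omega>. G y) \<le> 0" by simp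
  then have G0: "G x = 0" using continuous_nonneg_integral_le_0_imp_zero[OF O Gcont Gint Gnn] x(1) by blast
  assume "Gc x \<noteq> 0"
  then have "(D x *v Gc x) \<bullet> Gc x > 0" using Dpos[OF x(1)] by (simp add: inner_commute)
  then show False using G0 x(2) by (simp add: G_def)
qed

lemma constant_if_grad_zero_below_level:
  fixes c :: "real^'n::finite \<Rightarrow> real"
  assumes O: "open \<Omega>" "connected \<Omega>"
    and cder: "\<And>x. x \<in> \<Omega> \<Longrightarrow> (c has_derivative (\<lambda>h. Gc x \<bullet> h)) (at x)"
    and grad0: "\<And>x. x \<in> \<Omega> \<Longrightarrow> c x < \<kappa> \<Longrightarrow> Gc x = 0"
    and x0: "x0 \<in> \<Omega>" "c x0 < \<kappa>"
  shows "\<And>x. x \<in> \<Omega> \<Longrightarrow> c x = c x0"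
proof -
  define Z where "Z = {x \<in> \<Omega>. c x = c x0}"
  have ccont: "continuous_on \<Omega> c"
    by (rule continuous_at_imp_continuous_on) (use cder has_derivative_continuous in blast)
  have "open Z" unfolding open_contains_ball
  proof
    fix x assume "x \<in> Z"
    then have xU: "x \<in> \<Omega> \<inter> c -` {..<\<kappa>}" and cx: "c x = c x0" using x0(2) by (auto simp: Z_def)
    have "open (\<Omega> \<inter> c -` {..<\<kappa>})" by (rule continuous_open_preimage[OF ccont O(1)]) auto
    then obtain r where r: "r > 0" "ball x r \<subseteq> \<Omega> \<inter> c -` {..<\<kappa>}" using openE[OF _ xU] by blast
    have "\<exists>a. \<forall>y\<in>ball x r. c y = a"
    proof (rule has_derivative_zero_constant)
      fix y assume "y \<in> ball x r"
      then have y: "y \<in> \<Omega>" "c y < \<kappa>" using r(2) by auto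
      then have "(c has_derivative (\<lambda>h. 0)) (at y)" using cder[OF y(1)] grad0[OF y] by simp
      then show "(c has_derivative (\<lambda>h. 0)) (at y within ball x r)" by (rule has_derivative_at_withinI)
    qed simp
    then have "\<forall>y\<in>ball x r. c y = c x0" using cx r(1) by force
    then have "ball x r \<subseteq> Z" using r(2) by (auto simp: Z_def)
    then show "\<exists>e>0. ball x e \<subseteq> Z" using r(1) by blast
  qed
  then have "openin (top_of_set \<Omega>) Z" by (intro open_subset) (auto simp: Z_def)
  moreover have "closedin (top_of_set \<Omega>) Z"
    unfolding Z_def by (rule continuous_closedin_preimage_constant[OF ccont])
  moreover have "Z \<noteq> {}" using x0 by (auto simp: Z_def)
  ultimately have "Z = \<Omega>" using O(2) by (meson connected_clopen)
  then show "\<And>x. x \<in> \<Omega> \<Longrightarrow> c x = c x0" by (auto simp: Z_def)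
qed

lemma weak_minimum_principle:
  fixes \<Omega> :: "(real^'n::finite) set" and c :: "real^'n \<Rightarrow> real" and D :: "real^'n \<Rightarrow> real^'n^'n"
  assumes O: "open \<Omega>" "connected \<Omega>" "bounded \<Omega>" "\<Omega> \<noteq> {}"
    and cder: "\<And>x. x \<in> \<Omega> \<Longrightarrow> (c has_derivative (\<lambda>h. Gc x \<bullet> h)) (at x)"
    and gcont: "continuous_on \<Omega> Gc"
    and c0: "continuous_on (closure \<Omega>) c"
    and Dpos: "\<And>x u. x \<in> \<Omega> \<Longrightarrow> u \<noteq> 0 \<Longrightarrow> u \<bullet> (D x *v u) > 0"
    and Dc: "continuous_on \<Omega> D"
    and super: "weak_supersolution \<Omega> D Gc"
  shows "(INF x\<in>closure \<Omega>. c x) = (INF x\<in>frontier \<Omega>. c x)"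
proof -
  have fr_ne: "frontier \<Omega> \<noteq> {}"
    using frontier_not_empty[OF O(4)] O(3) not_bounded_UNIV by blast
  have fr_cl: "frontier \<Omega> \<subseteq> closure \<Omega>" by (simp add: frontier_def)
  obtain xs where xs: "xs \<in> closure \<Omega>" "\<And>y. y \<in> closure \<Omega> \<Longrightarrow> c xs \<le> c y"
    using continuous_attains_inf[OF compact_closure[THEN iffD2, OF O(3)] _ c0] O(4) by (metis closure_eq_empty)
  obtain xf where xf: "xf \<in> frontier \<Omega>" "\<And>y. y \<in> frontier \<Omega> \<Longrightarrow> c xf \<le> c y"
    using continuous_attains_inf[OF compact_frontier_bounded[OF O(3)] fr_ne continuous_on_subset[OF c0 fr_cl]]
    by blast
  have "(INF x\<in>closure \<Omega>. c x) = c xs" by (rule cInf_eq_minimum) (use xs in auto)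
  moreover have "(INF x\<in>frontier \<Omega>. c x) = c xf" by (rule cInf_eq_minimum) (use xf in auto)
  moreover have "\<not> c xs < c xf"
  proof
    assume lt: "c xs < c xf"
    define \<kappa> where "\<kappa> = (c xs + c xf) / 2"
    define K where "K = {x \<in> closure \<Omega>. c x \<le> \<kappa>}"
    have K_\<Omega>: "K \<subseteq> \<Omega>"
    proof
      fix x assume x: "x \<in> K"
      then have "x \<notin> frontier \<Omega>" using xf(2) lt by (force simp: K_def \<kappa>_def)
      then show "x \<in> \<Omega>" using x closure_Un_frontier by (auto simp: K_def)
    qed
    have "closed K" unfolding K_def
      by (rule continuous_on_closed_Collect_le[OF c0 continuous_on_const]) simp
    then have K: "compact K" "K \<subseteq> \<Omega>"
      using K_\<Omega> bounded_subset[OF bounded_closure[OF O(3)]] by (auto simp: K_def compact_eq_bounded_closed)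
    have sublevel: "\<And>x. x \<in> \<Omega> \<Longrightarrow> c x \<le> \<kappa> \<Longrightarrow> x \<in> K" using closure_subset by (auto simp: K_def)
    have xs_\<Omega>: "xs \<in> \<Omega>" "c xs < \<kappa>" using K_\<Omega> xs(1) lt by (auto simp: K_def \<kappa>_def)
    have "c x = c xs" if "x \<in> \<Omega>" for x
      using constant_if_grad_zero_below_level[OF O(1,2) cder _ xs_\<Omega> that]
        weak_supersolution_grad_zero_below_level[OF O(1) cder gcont Dpos Dc super K sublevel] by blast
    then have "closure \<Omega> \<subseteq> {x \<in> closure \<Omega>. c x = c xs}"
      using closure_subset continuous_closed_preimage_constant[OF c0 closed_closure]
      by (intro closure_minimal) auto
    then show False using xf(1) fr_cl lt by auto
  qed
  moreover have "c xs \<le> c xf" using xs(2) xf(1) fr_cl by blast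
  ultimately show ?thesis by simp
qed

theorem mainTheorem1:
  fixes \<Omega> :: "(real ^ 'n::finite) set"
    and D :: "real ^ 'n \<Rightarrow> real ^ 'n ^ 'n"
    and f c Cp :: "real ^ 'n \<Rightarrow> real"
    and v :: "real ^ 'n \<Rightarrow> real ^ 'n"
  assumes domain: "open \<Omega>" "connected \<Omega>" "bounded \<Omega>" "\<Omega> \<noteq> {}"
    and D_sym: "\<forall>x\<in>closure \<Omega>. transpose (D x) = D x"
    and D_posdef: "\<forall>x\<in>closure \<Omega>. \<forall>u. u \<noteq> 0 \<longrightarrow> u \<bullet> (D x *v u) > 0"
    and D_C1: "\<forall>i j. C1_on \<Omega> (\<lambda>x. D x $ i $ j)"
    and D_cont: "continuous_on (closure \<Omega>) D"
    and f_L2: "L2 \<Omega> f"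
    and f_nonneg: "AE x in lebesgue_on \<Omega>. f x \<ge> 0"
    and cp: "H1 \<Omega> Cp"
    and c_H1: "H1 \<Omega> c"
    and v_Hdiv: "Hdiv \<Omega> v"
    and weak: "\<forall>q w. H1 \<Omega> q \<longrightarrow> Hdiv \<Omega> w \<longrightarrow>
        (LINT x|lebesgue_on \<Omega>. w x \<bullet> (matrix_inv (D x) *v v x))
      - (LINT x|lebesgue_on \<Omega>. wdiv \<Omega> w x * c x)
      + bdry_pair \<Omega> w Cp
      - (LINT x|lebesgue_on \<Omega>. q x * (wdiv \<Omega> v x - f x))
      - (1/2) * (LINT x|lebesgue_on \<Omega>.
            (matrix_inv (D x) *v w x + wgrad \<Omega> q x) \<bullet>
            (D x *v (matrix_inv (D x) *v v x + wgrad \<Omega> c x))) = 0"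
    and c_H2: "H2 \<Omega> c"
    and c_C1: "C1_on \<Omega> c"
    and c_C0: "continuous_on (closure \<Omega>) c"
  shows "(INF x\<in>closure \<Omega>. c x) = (INF x\<in>frontier \<Omega>. c x)"
proof -
  obtain Gc where cder: "\<And>x. x \<in> \<Omega> \<Longrightarrow> (c has_derivative (\<lambda>h. Gc x \<bullet> h)) (at x)"
    and gcont: "continuous_on \<Omega> Gc"
    using c_C1 unfolding C1_on_def by blast
  have D_inv: "\<And>x. x \<in> closure \<Omega> \<Longrightarrow> invertible (D x)"
    using D_posdef invertible_if_pos_def by blast
  interpret vms_solution \<Omega> D Cp f c v
    using domain D_inv D_sym D_cont cp c_H1 v_Hdiv f_L2 weak by unfold_locales (auto simp: vms_form_def)
  have super: "weak_supersolution \<Omega> D Gc" by (rule weak_supersolution[OF cder gcont f_nonneg])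
  have D_pos: "\<And>x u. x \<in> \<Omega> \<Longrightarrow> u \<noteq> 0 \<Longrightarrow> u \<bullet> (D x *v u) > 0"
    using D_posdef closure_subset by blast
  show ?thesis by (rule weak_minimum_principle[OF domain cder gcont c_C0 D_pos continuous_on_D super])
qed

end
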